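(* Let $\phi$ be a skew-symmetric super-biderivation of $H=H(m,n;\underline t)$. Let $i\in Y$, and let $\alpha,u$ be such that $D_H(x^{(\alpha)}x^u)\in H$. Then $\phi(D_H(x_ix_{i'}),D_H(x^{(\alpha)}x^u))\in H_{(\alpha+\langle u\rangle)}$.
   Context: Setting for $H$: $\mathbb{F}$ is algebraically closed of characteristic $p>2$; $m=2k$ and $n=2t$ are even integers with $m,n\ge 2$; $s=m+n$; $Y_0=\{1,\dots,m\}$, $Y_1=\{m+1,\dots,s\}$, $Y=Y_0\cup Y_1$. Fix positive integers $\underline{t}=(t_1,\dots,t_m)$, $\pi_i=p^{t_i}-1$. $\Lambda(m,n;\underline{t})$ is the associative superalgebra with basis $x^{(\alpha)}x^u$ ($\alpha\in\mathbb{N}^m$, $0\le\alpha_i\le\pi_i$; $u=\langle i_1<\dots<i_r\rangle\subseteq Y_1$, $x^u=x_{i_1}\cdots x_{i_r}$, $x^\varnothing=1$), with $x^{(\alpha)}x^{(\beta)}=\binom{\alpha+\beta}{\alpha}x^{(\alpha+\beta)}$, $x_ix_j=-x_jx_i$ ($i,j\in Y_1$), $x^{(\alpha)}x_j=x_jx^{(\alpha)}$; parity of $x^{(\alpha)}x^u$ is $|u|\bmod 2$; $x_i=x^{(\varepsilon_i)}$ for $i\in Y_0$. $D_i(x^{(\alpha)}x^u)=x^{(\alpha-\varepsilon_i)}x^u$ (zero if $\alpha_i=0$) for $i\in Y_0$, $D_i(x^{(\alpha)}x^u)=x^{(\alpha)}\partial_i(x^u)$ for $i\in Y_1$ ($\partial_i$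 the Grassmann partial derivative); parity $\tau(i)=\bar0$ ($i\in Y_0$), $\bar1$ ($i\in Y_1$). $W(m,n;\underline t)=\{\sum f_iD_i\}$ with bracket $[fD_i,gD_j]=fD_i(g)D_j-(-1)^{\mathrm{d}(fD_i)\mathrm{d}(gD_j)}gD_j(f)D_i$. Set $i'=i+k$ ($1\le i\le k$), $i-k$ ($k<i\le 2k$), $i+t$ ($2k<i\le 2k+t$), $i-t$ ($2k+t<i\le s$); $\sigma(i)=1$ ($1\le i\le k$), $-1$ ($k<i\le2k$), $1$ ($2k<i\le s$). $D_H(f)=\sum_{i\in Y}\sigma(i')(-1)^{\tau(i')\mathrm{d}(f)}D_{i'}(f)D_i$ for homogeneous $f$. $\overline{H}=\mathrm{span}\{D_H(f)\}$, $H=[\overline H,\overline H]$, a finite-dimensional simple Lie superalgebra. Weight spaces: $T_H=\mathrm{span}\{D_H(x_lx_{l'}):l\in Y\}$ is an abelian subalgebra of $H$, and each $D_H(x^{(\alpha)}x^u)$ is a common eigenvector: $[D_H(x_lx_{l'}),D_H(x^{(\alpha)}x^u)]=\sigma(l)(\alpha_{l'}-\alpha_l+\delta_{(l'\in u)}-\delta_{(l\in u)})D_H(x^{(\alpha)}x^u)$ for all $l\in Y$ (with $\alpha_l:=0$ for $l\in Y_1$ and $\delta_{(P)}=1$ if $P$ is true, $0$ otherwise). $H_{(\alpha+\langle u\rangle)}$ denotes the set of $h\in H$ with $[D_H(x_lx_{l'}),h]=\sigma(l)(\alpha_{l'}-\alpha_l+\delta_{(l'\in u)}-\delta_{(l\in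 u)})h$ for all $l\in Y$. A skew-symmetric super-biderivation of a Lie superalgebra $L$ is a bilinear map $\phi:L\times L\to L$, $\mathbb{Z}_2$-homogeneous of degree $\mathrm{d}(\phi)$ (i.e. $\phi(L_\alpha,L_\beta)\subseteq L_{\alpha+\beta+\mathrm{d}(\phi)}$), with $\phi(x,[y,z])=[\phi(x,y),z]+(-1)^{(\mathrm{d}(\phi)+\mathrm{d}(x))\mathrm{d}(y)}[y,\phi(x,z)]$ and $\phi(x,y)=-(-1)^{\mathrm{d}(\phi)\mathrm{d}(x)+\mathrm{d}(\phi)\mathrm{d}(y)+\mathrm{d}(x)\mathrm{d}(y)}\phi(y,x)$ for homogeneous $x,y,z$. *)

theory Defs
  imports "HOL-Computational_Algebra.Polynomial" "HOL-Library.Function_Algebras"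
begin

text \<open>A basis monomial x^(alpha) x^u of Lambda(m,n;t) is indexed by a pair (alpha,u) with
  alpha :: nat => nat (zero outside Y0) and u a subset of Y1.  An element of Lambda is a
  coefficient function on such indices; an element sum_i f_i D_i of W is a function
  giving for each i the coefficient f_i in Lambda.\<close>

type_synonym idx = "(nat \<Rightarrow> nat) \<times> nat set"
type_synonym 'a lam = "idx \<Rightarrow> 'a"
type_synonym 'a witt = "nat \<Rightarrow> 'a lam"

definition Y0 :: "nat \<Rightarrow> nat set" where "Y0 m = {1..m}"
definition Y1 :: "nat \<Rightarrow> nat \<Rightarrow> nat set" where "Y1 m n = {m+1..m+n}"
definition Y :: "nat \<Rightarrow> nat \<Rightarrow> nat set" where "Y m n = {1..m+n}"

definition piv :: "'a::field itself \<Rightarrow> (nat \<Rightarrow> nat) \<Rightarrow> nat \<Rightarrow> nat" where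
  "piv T tt i = CHAR('a) ^ tt i - 1"

definition valid_idx :: "'a::field itself \<Rightarrow> nat \<Rightarrow> nat \<Rightarrow> (nat \<Rightarrow> nat) \<Rightarrow> idx \<Rightarrow> bool" where
  "valid_idx T m n tt a \<longleftrightarrow>
     (\<forall>j. j \<notin> Y0 m \<longrightarrow> fst a j = 0) \<and> (\<forall>j\<in>Y0 m. fst a j \<le> piv T tt j) \<and> snd a \<subseteq> Y1 m n"

definition Vset :: "'a::field itself \<Rightarrow> nat \<Rightarrow> nat \<Rightarrow> (nat \<Rightarrow> nat) \<Rightarrow> idx set" where
  "Vset T m n tt = {a. valid_idx T m n tt a}"

definition Lam :: "nat \<Rightarrow> nat \<Rightarrow> (nat \<Rightarrow> nat) \<Rightarrow> ('a::field) lam set" where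
  "Lam m n tt = {f. \<forall>a. \<not> valid_idx TYPE('a) m n tt a \<longrightarrow> f a = 0}"

definition ebas :: "idx \<Rightarrow> ('a::field) lam" where
  "ebas a = (\<lambda>c. if c = a then 1 else 0)"

definition lsmult :: "'a::field \<Rightarrow> 'a lam \<Rightarrow> 'a lam" where
  "lsmult c f = (\<lambda>a. c * f a)"

definition wsmult :: "'a::field \<Rightarrow> 'a witt \<Rightarrow> 'a witt" (infixr "\<cdot>w" 75) where
  "wsmult c w = (\<lambda>i a. c * w i a)"

text \<open>product of basis monomials:
  x^(alpha) x^u * x^(beta) x^v = binom(alpha+beta, alpha) * sign * x^(alpha+beta) x^(u Un v)\<close>
definition bmult :: "nat \<Rightarrow> nat \<Rightarrow> (nat \<Rightarrow> nat) \<Rightarrow> idx \<Rightarrow> idx \<Rightarrow> ('a::field) lam" where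
  "bmult m n tt a b =
     (let al = fst a; u = snd a; be = fst b; v = snd b; c = (\<lambda>j. al j + be j, u \<union> v) in
      if u \<inter> v = {} \<and> valid_idx TYPE('a) m n tt c then
        lsmult ((\<Prod>j\<in>Y0 m. of_nat ((al j + be j) choose al j))
                * (-1) ^ card {(i,j). i \<in> u \<and> j \<in> v \<and> j < i}) (ebas c)
      else 0)"

definition Lmult :: "nat \<Rightarrow> nat \<Rightarrow> (nat \<Rightarrow> nat) \<Rightarrow> ('a::field) lam \<Rightarrow> 'a lam \<Rightarrow> 'a lam" where
  "Lmult m n tt f g = (\<lambda>c. \<Sum>a\<in>Vset TYPE('a) m n tt. \<Sum>b\<in>Vset TYPE('a) m n tt.
                          f a * g b * bmult m n tt a b c)"

definition xg :: "nat \<Rightarrow> nat \<Rightarrow> ('a::field) lam" where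
  "xg m i = (if i \<in> Y0 m then ebas ((\<lambda>j. 0)(i := 1), {}) else ebas (\<lambda>j. 0, {i}))"

text \<open>D_i on basis monomials (Grassmann partial derivative for odd i)\<close>
definition Dbas :: "nat \<Rightarrow> nat \<Rightarrow> idx \<Rightarrow> ('a::field) lam" where
  "Dbas m i a =
     (if i \<in> Y0 m then (if fst a i = 0 then 0 else ebas ((fst a)(i := fst a i - 1), snd a))
      else if i \<in> snd a then lsmult ((-1) ^ card {j \<in> snd a. j < i}) (ebas (fst a, snd a - {i}))
      else 0)"

definition Dop :: "nat \<Rightarrow> nat \<Rightarrow> (nat \<Rightarrow> nat) \<Rightarrow> nat \<Rightarrow> ('a::field) lam \<Rightarrow> 'a lam" where
  "Dop m n tt i f = (\<lambda>c. \<Sum>a\<in>Vset TYPE('a) m n tt. f a * Dbas m i a c)"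

definition tau :: "nat \<Rightarrow> nat \<Rightarrow> nat" where
  "tau m i = (if i \<in> Y0 m then 0 else 1)"

definition bbr :: "nat \<Rightarrow> nat \<Rightarrow> (nat \<Rightarrow> nat) \<Rightarrow> nat \<Rightarrow> idx \<Rightarrow> nat \<Rightarrow> idx \<Rightarrow> ('a::field) witt" where
  "bbr m n tt i a j b =
     (\<lambda>l. (if l = j then Lmult m n tt (ebas a) (Dbas m i b) else 0)
          - (if l = i then lsmult ((-1) ^ ((card (snd a) + tau m i) * (card (snd b) + tau m j)))
                                  (Lmult m n tt (ebas b) (Dbas m j a)) else 0))"

definition Wbr :: "nat \<Rightarrow> nat \<Rightarrow> (nat \<Rightarrow> nat) \<Rightarrow> ('a::field) witt \<Rightarrow> 'a witt \<Rightarrow> 'a witt" where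
  "Wbr m n tt w z = (\<Sum>i\<in>Y m n. \<Sum>a\<in>Vset TYPE('a) m n tt. \<Sum>j\<in>Y m n. \<Sum>b\<in>Vset TYPE('a) m n tt.
                        (w i a * z j b) \<cdot>w bbr m n tt i a j b)"

definition pr :: "nat \<Rightarrow> nat \<Rightarrow> nat \<Rightarrow> nat" where
  "pr m n i = (let k = m div 2; t = n div 2 in
     if i \<le> k then i + k else if i \<le> 2*k then i - k else if i \<le> 2*k + t then i + t else i - t)"

definition sig :: "nat \<Rightarrow> nat \<Rightarrow> int" where
  "sig m i = (let k = m div 2 in if i \<le> k then 1 else if i \<le> 2*k then -1 else 1)"

definition dL :: "('a::field) lam \<Rightarrow> nat" where
  "dL f = (if \<exists>a. f a \<noteq> 0 \<and> odd (card (snd a)) then 1 else 0)"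

definition homogL :: "('a::field) lam \<Rightarrow> bool" where
  "homogL f \<longleftrightarrow> (\<exists>b. \<forall>a. f a \<noteq> 0 \<longrightarrow> card (snd a) mod 2 = b)"

definition DH :: "nat \<Rightarrow> nat \<Rightarrow> (nat \<Rightarrow> nat) \<Rightarrow> ('a::field) lam \<Rightarrow> 'a witt" where
  "DH m n tt f = (\<lambda>i. if i \<in> Y m n then
        lsmult (of_int (sig m (pr m n i)) * (-1) ^ (tau m (pr m n i) * dL f)) (Dop m n tt (pr m n i) f)
      else 0)"

definition lspan :: "('a::field) witt set \<Rightarrow> 'a witt set" where
  "lspan S = {w. \<exists>F c. finite F \<and> F \<subseteq> S \<and> w = (\<Sum>v\<in>F. c v \<cdot>w v)}"

definition Hbar :: "nat \<Rightarrow> nat \<Rightarrow> (nat \<Rightarrow> nat) \<Rightarrow> ('a::field) witt set" where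
  "Hbar m n tt = lspan {DH m n tt f | f. f \<in> Lam m n tt \<and> homogL f}"

definition Hset :: "nat \<Rightarrow> nat \<Rightarrow> (nat \<Rightarrow> nat) \<Rightarrow> ('a::field) witt set" where
  "Hset m n tt = lspan {Wbr m n tt x y | x y. x \<in> Hbar m n tt \<and> y \<in> Hbar m n tt}"

text \<open>Z_2-homogeneous components (parity of f D_i is d(f) + tau(i))\<close>
definition Wpar :: "nat \<Rightarrow> nat \<Rightarrow> ('a::field) witt set" where
  "Wpar m b = {w. \<forall>i a. w i a \<noteq> 0 \<longrightarrow> (card (snd a) + tau m i) mod 2 = b}"

definition Hpar :: "nat \<Rightarrow> nat \<Rightarrow> (nat \<Rightarrow> nat) \<Rightarrow> nat \<Rightarrow> ('a::field) witt set" where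
  "Hpar m n tt b = Hset m n tt \<inter> Wpar m b"

definition super_biderivation ::
  "nat \<Rightarrow> nat \<Rightarrow> (nat \<Rightarrow> nat) \<Rightarrow> nat \<Rightarrow> (('a::field) witt \<Rightarrow> 'a witt \<Rightarrow> 'a witt) \<Rightarrow> bool" where
  "super_biderivation m n tt d \<phi> \<longleftrightarrow>
     d < 2 \<and>
     (\<forall>x\<in>Hset m n tt. \<forall>y\<in>Hset m n tt. \<phi> x y \<in> Hset m n tt) \<and>
     (\<forall>x\<in>Hset m n tt. \<forall>y\<in>Hset m n tt. \<forall>z\<in>Hset m n tt.
         \<phi> (x + y) z = \<phi> x z + \<phi> y z \<and> \<phi> z (x + y) = \<phi> z x + \<phi> z y) \<and>
     (\<forall>c. \<forall>x\<in>Hset m n tt. \<forall>y\<in>Hset m n tt.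
         \<phi> (c \<cdot>w x) y = c \<cdot>w \<phi> x y \<and> \<phi> x (c \<cdot>w y) = c \<cdot>w \<phi> x y) \<and>
     (\<forall>a b. a < 2 \<longrightarrow> b < 2 \<longrightarrow> (\<forall>x\<in>Hpar m n tt a. \<forall>y\<in>Hpar m n tt b.
         \<phi> x y \<in> Hpar m n tt ((a + b + d) mod 2))) \<and>
     (\<forall>a b c. a < 2 \<longrightarrow> b < 2 \<longrightarrow> c < 2 \<longrightarrow>
        (\<forall>x\<in>Hpar m n tt a. \<forall>y\<in>Hpar m n tt b. \<forall>z\<in>Hpar m n tt c.
          \<phi> x (Wbr m n tt y z) = Wbr m n tt (\<phi> x y) z + ((-1) ^ ((d + a) * b)) \<cdot>w Wbr m n tt y (\<phi> x z))) \<and>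
     (\<forall>a b. a < 2 \<longrightarrow> b < 2 \<longrightarrow> (\<forall>x\<in>Hpar m n tt a. \<forall>y\<in>Hpar m n tt b.
          \<phi> x y = - (((-1) ^ (d * a + d * b + a * b)) \<cdot>w \<phi> y x)))"

text \<open>the weight space H_(alpha + <u>) (alpha_l = 0 for l in Y1 automatically)\<close>
definition weight_space :: "nat \<Rightarrow> nat \<Rightarrow> (nat \<Rightarrow> nat) \<Rightarrow> (nat \<Rightarrow> nat) \<Rightarrow> nat set \<Rightarrow> ('a::field) witt set" where
  "weight_space m n tt al u = {h \<in> Hset m n tt. \<forall>l\<in>Y m n.
     Wbr m n tt (DH m n tt (Lmult m n tt (xg m l) (xg m (pr m n l)))) h =
       of_int (sig m l * (int (al (pr m n l)) - int (al l)
                 + (if pr m n l \<in> u then 1 else 0) - (if l \<in> u then 1 else 0))) \<cdot>w h}"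

end

theory Submission
  imports Defs
begin

(* The elements h_l = D_H(x_l x_l') span a torus of H that acts diagonally on the monomial vector
   fields x^a D_q, with eigenvalue sig(l) times the difference of the degrees in x_l' and x_l
   (D_q counting as x_q^-1).  Let phi be a super-biderivation and z_ab = phi(h_a, h_b).  As the torus
   is abelian, the derivation rule makes [h_c, z_ab] symmetric in b, c, while skew-symmetry makes it
   alternating in a, b; hence it vanishes, because 2 is invertible.  Playing the same two rules against
   the torus eigenvectors D_j gives [z_ab, D_j] = 0, and an element of W commuting with every D_j and
   with the torus is zero, so z_ab = 0.  Finally
   phi(h_i, [h_l, E]) = [phi(h_i, h_l), E] + [h_l, phi(h_i, E)] = [h_l, phi(h_i, E)],
   so phi(h_i, -) preserves the weight spaces of the torus. *)

lemma
  assumes "even m" "even n" "i \<in> Y m n"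
  shows pr_in_Y: "pr m n i \<in> Y m n"
    and pr_pr: "pr m n (pr m n i) = i"
    and pr_neq: "pr m n i \<noteq> i"
    and pr_in_Y0_iff: "pr m n i \<in> Y0 m \<longleftrightarrow> i \<in> Y0 m"
    and sig_pr_Y0: "i \<in> Y0 m \<Longrightarrow> sig m (pr m n i) = - sig m i"
    and sig_Y1: "i \<notin> Y0 m \<Longrightarrow> sig m i = 1"
    and sig_cases: "sig m i = 1 \<or> sig m i = -1"
proof -
  obtain k t where "m = 2*k" "n = 2*t" using assms(1,2) by (auto elim!: evenE)
  with assms(3) show "pr m n i \<in> Y m n" "pr m n (pr m n i) = i" "pr m n i \<noteq> i"
    "pr m n i \<in> Y0 m \<longleftrightarrow> i \<in> Y0 m" "i \<in> Y0 m \<Longrightarrow> sig m (pr m n i) = - sig m i"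
    "i \<notin> Y0 m \<Longrightarrow> sig m i = 1" "sig m i = 1 \<or> sig m i = -1"
    by (auto simp: pr_def sig_def Y_def Y0_def Let_def)
qed

lemma pr_eq_iff:
  assumes "even m" "even n" "i \<in> Y m n" "j \<in> Y m n"
  shows "pr m n i = j \<longleftrightarrow> i = pr m n j"
  using pr_pr[OF assms(1-3)] pr_pr[OF assms(1,2,4)] by metis

lemma Y1_iff: "q \<in> Y1 m n \<longleftrightarrow> q \<in> Y m n \<and> q \<notin> Y0 m"
  by (auto simp: Y_def Y0_def Y1_def)

lemma Y0_subset_Y: "Y0 m \<subseteq> Y m n"
  by (auto simp: Y_def Y0_def)

lemma finite_Y: "finite (Y m n)"
  by (simp add: Y_def)

lemma finite_Vset: "finite (Vset T m n tt)"
proof -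
  define K where "K = Max (piv T tt ` Y0 m)"
  define F where "F = {f. \<forall>x. (x \<in> Y0 m \<longrightarrow> f x \<in> {0..K}) \<and> (x \<notin> Y0 m \<longrightarrow> f x = 0)}"
  have "fst a x \<le> K" if "valid_idx T m n tt a" "x \<in> Y0 m" for a x
  proof -
    have "fst a x \<le> piv T tt x" using that by (simp add: valid_idx_def)
    also have "\<dots> \<le> K" using that(2) unfolding K_def by (intro Max_ge) (auto simp: Y0_def)
    finally show ?thesis .
  qed
  then have "Vset T m n tt \<subseteq> F \<times> Pow (Y1 m n)"
    by (auto simp: Vset_def F_def valid_idx_def)
  moreover have "finite (F \<times> Pow (Y1 m n))"
    unfolding F_def by (intro finite_cartesian_product finite_set_of_finite_funs) (auto simp: Y0_def Y1_def)
  ultimately show ?thesis by (rule finite_subset)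
qed

lemma piv_ge_2:
  assumes "CHAR('a::field) > 2" "tt j > 0"
  shows "piv TYPE('a) tt j \<ge> 2"
proof -
  have "CHAR('a) \<le> CHAR('a) ^ tt j" using assms by (simp add: self_le_power)
  then show ?thesis using assms by (simp add: piv_def)
qed

lemma two_neq_zero_if_char_gt_2:
  assumes "CHAR('a::field) > 2"
  shows "(2::'a) \<noteq> 0"
proof
  assume "(2::'a) = 0"
  then have "CHAR('a) dvd 2" using of_nat_eq_0_iff_char_dvd[of 2, where 'a='a] by simp
  with assms show False by (simp add: nat_dvd_not_less)
qed

section \<open>Monomial calculus in \<open>\<Lambda>(m,n;t)\<close>\<close>

lemma sum_ebas_mult:
  assumes "finite S"
  shows "(\<Sum>b\<in>S. (ebas a b :: 'a::field) * F b) = (if a \<in> S then F a else 0)"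
proof -
  have "(\<Sum>b\<in>S. (ebas a b :: 'a) * F b) = (\<Sum>b\<in>S. if a = b then F b else 0)"
    by (intro sum.cong) (auto simp: ebas_def)
  then show ?thesis using assms by (simp add: sum.delta)
qed

lemma lsmult_zero [simp]: "lsmult 0 f = (0 :: 'a::field lam)"
  by (simp add: lsmult_def fun_eq_iff)

lemma lsmult_one [simp]: "lsmult 1 f = (f :: 'a::field lam)"
  by (simp add: lsmult_def fun_eq_iff)

lemma lsmult_zero_right [simp]: "lsmult c 0 = (0 :: 'a::field lam)"
  by (simp add: lsmult_def fun_eq_iff)

lemma lsmult_lsmult [simp]: "lsmult a (lsmult b f) = lsmult (a * b) (f :: 'a::field lam)"
  by (simp add: lsmult_def fun_eq_iff mult.assoc)

lemma dL_ebas: "dL (ebas g :: 'a::field lam) = (if odd (card (snd g)) then 1 else 0)"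
  by (cases g) (auto simp: dL_def ebas_def)

lemma dL_lsmult: "c \<noteq> 0 \<Longrightarrow> dL (lsmult c f :: 'a::field lam) = dL f"
  by (simp add: dL_def lsmult_def)

lemma Lmult_ebas_left:
  assumes "a \<in> Vset TYPE('a::field) m n tt"
  shows "(Lmult m n tt (ebas a) g c :: 'a) = (\<Sum>b\<in>Vset TYPE('a) m n tt. g b * bmult m n tt a b c)"
proof -
  have "(Lmult m n tt (ebas a) g c :: 'a) =
     (\<Sum>a'\<in>Vset TYPE('a) m n tt. ebas a a' * (\<Sum>b\<in>Vset TYPE('a) m n tt. g b * bmult m n tt a' b c))"
    unfolding Lmult_def by (simp add: sum_distrib_left mult.assoc)
  also have "\<dots> = (\<Sum>b\<in>Vset TYPE('a) m n tt. g b * bmult m n tt a b c)"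
    using assms finite_Vset by (subst sum_ebas_mult) auto
  finally show ?thesis .
qed

lemma Lmult_ebas_ebas:
  assumes "a \<in> Vset TYPE('a::field) m n tt" "b \<in> Vset TYPE('a) m n tt"
  shows "(Lmult m n tt (ebas a) (ebas b) :: 'a lam) = bmult m n tt a b"
proof
  fix c
  show "(Lmult m n tt (ebas a) (ebas b) c :: 'a) = bmult m n tt a b c"
    unfolding Lmult_ebas_left[OF assms(1)] using assms finite_Vset
    by (subst sum_ebas_mult) auto
qed

lemma Lmult_lsmult_right:
  "(Lmult m n tt f (lsmult s g) :: 'a::field lam) = lsmult s (Lmult m n tt f g)"
  unfolding Lmult_def lsmult_def by (auto simp: sum_distrib_left algebra_simps fun_eq_iff)

lemma Lmult_zero_right [simp]: "(Lmult m n tt f 0 :: 'a::field lam) = 0"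
  unfolding Lmult_def by (auto simp: fun_eq_iff)

lemma Dop_ebas:
  assumes "a \<in> Vset TYPE('a::field) m n tt"
  shows "(Dop m n tt j (ebas a) :: 'a lam) = Dbas m j a"
proof
  fix c
  show "Dop m n tt j (ebas a) c = (Dbas m j a c :: 'a)"
    unfolding Dop_def using assms finite_Vset by (subst sum_ebas_mult) auto
qed

lemma Dop_lsmult: "(Dop m n tt j (lsmult c f) :: 'a::field lam) = lsmult c (Dop m n tt j f)"
  unfolding Dop_def lsmult_def by (auto simp: sum_distrib_left mult.assoc)

lemma Dop_zero [simp]: "(Dop m n tt j 0 :: 'a::field lam) = 0"
  unfolding Dop_def by (auto simp: fun_eq_iff)

lemma bmult_nonzeroD:
  assumes "(bmult m n tt a b c :: 'a::field) \<noteq> 0"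
  shows "c = (\<lambda>j. fst a j + fst b j, snd a \<union> snd b)" "snd a \<inter> snd b = {}"
    "valid_idx TYPE('a) m n tt c"
  using assms by (auto simp: bmult_def Let_def lsmult_def ebas_def split: if_splits)

lemma Dbas_nonzeroD:
  assumes "(Dbas m j a c :: 'a::field) \<noteq> 0"
  shows "(j \<in> Y0 m \<and> fst a j \<noteq> 0 \<and> c = ((fst a)(j := fst a j - 1), snd a)) \<or>
         (j \<notin> Y0 m \<and> j \<in> snd a \<and> c = (fst a, snd a - {j}))"
  using assms by (auto simp: Dbas_def lsmult_def ebas_def split: if_splits)

lemma Dbas_nonzero_Vset:
  assumes "a \<in> Vset TYPE('a::field) m n tt" "(Dbas m j a c :: 'a) \<noteq> 0"
  shows "c \<in> Vset TYPE('a) m n tt"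
proof -
  have "fst a j - 1 \<le> piv TYPE('a) tt j" if "fst a j \<le> piv TYPE('a) tt j" using that by linarith
  then show ?thesis using Dbas_nonzeroD[OF assms(2)] assms(1) unfolding Vset_def valid_idx_def by auto
qed

lemma Lmult_ebas_nonzeroD:
  assumes "a \<in> Vset TYPE('a::field) m n tt" "(Lmult m n tt (ebas a) g c :: 'a) \<noteq> 0"
  obtains b where "g b \<noteq> 0" "(bmult m n tt a b c :: 'a) \<noteq> 0"
proof -
  from assms have "(\<Sum>b\<in>Vset TYPE('a) m n tt. g b * bmult m n tt a b c) \<noteq> 0"
    by (simp add: Lmult_ebas_left)
  then obtain b where "g b * bmult m n tt a b c \<noteq> 0"
    by (meson sum.not_neutral_contains_not_neutral)
  then have "g b \<noteq> 0" "(bmult m n tt a b c :: 'a) \<noteq> 0" by auto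
  then show ?thesis by (rule that)
qed

definition var_degree :: "nat \<Rightarrow> idx \<Rightarrow> nat" where
  "var_degree t a = fst a t + (if t \<in> snd a then 1 else 0)"

lemma var_degree_bmult:
  assumes "(bmult m n tt a b c :: 'a::field) \<noteq> 0"
  shows "var_degree t c = var_degree t a + var_degree t b"
  using bmult_nonzeroD(1,2)[OF assms] by (auto simp: var_degree_def)

lemma var_degree_Dbas:
  assumes "(Dbas m j a c :: 'a::field) \<noteq> 0"
  shows "int (var_degree t c) = int (var_degree t a) - (if t = j then 1 else 0)"
  using Dbas_nonzeroD[OF assms] by (auto simp: var_degree_def)

definition one_idx :: idx where
  "one_idx = ((\<lambda>j. 0), {})"

definition gen_idx :: "nat \<Rightarrow> nat \<Rightarrow> idx" where
  "gen_idx m q = (if q \<in> Y0 m then ((\<lambda>j. 0)(q := 1), {}) else ((\<lambda>j. 0), {q}))"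

lemma xg_eq_ebas_gen_idx: "xg m q = ebas (gen_idx m q)"
  by (simp add: xg_def gen_idx_def)

lemma one_idx_Vset [simp]: "one_idx \<in> Vset TYPE('a::field) m n tt"
  by (auto simp: one_idx_def Vset_def valid_idx_def)

lemma gen_idx_Vset:
  assumes "CHAR('a::field) > 2" "\<forall>j\<in>Y0 m. tt j > 0" "q \<in> Y m n"
  shows "gen_idx m q \<in> Vset TYPE('a) m n tt"
proof (cases "q \<in> Y0 m")
  case True
  then have "piv TYPE('a) tt q \<ge> 2" using assms piv_ge_2 by blast
  then show ?thesis using True by (auto simp: gen_idx_def Vset_def valid_idx_def)
next
  case False
  then show ?thesis using assms(3) by (auto simp: gen_idx_def Vset_def valid_idx_def Y1_iff)
qed

lemma var_degree_one_idx [simp]: "var_degree t one_idx = 0"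
  by (simp add: var_degree_def one_idx_def)

lemma var_degree_gen_idx [simp]: "var_degree t (gen_idx m q) = (if t = q then 1 else 0)"
  by (auto simp: var_degree_def gen_idx_def)

lemma Dbas_one_idx [simp]: "(Dbas m q one_idx :: 'a::field lam) = 0"
  by (auto simp: Dbas_def one_idx_def)

lemma Dbas_gen_idx: "(Dbas m q (gen_idx m p) :: 'a::field lam) = (if q = p then ebas one_idx else 0)"
proof -
  have u: "(\<lambda>j::nat. 0::nat)(p := 0) = (\<lambda>j. 0)" and c: "{j. j = p \<and> j < p} = {}" by auto
  show ?thesis by (auto simp: Dbas_def gen_idx_def one_idx_def lsmult_def u c)
qed

lemma bmult_one_idx_left:
  assumes "valid_idx TYPE('a::field) m n tt b"
  shows "(bmult m n tt one_idx b :: 'a lam) = ebas b"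
  using assms by (simp add: bmult_def Let_def one_idx_def)

lemma bmult_one_idx_right:
  assumes "valid_idx TYPE('a::field) m n tt b"
  shows "(bmult m n tt b one_idx :: 'a lam) = ebas b"
proof -
  have e: "(\<lambda>j. fst b j + fst one_idx j, snd b \<union> snd one_idx) = b" by (simp add: one_idx_def)
  show ?thesis unfolding bmult_def Let_def e using assms by (simp add: one_idx_def lsmult_def)
qed

lemma Lmult_one_idx_left:
  assumes "\<And>c. g c \<noteq> 0 \<Longrightarrow> c \<in> Vset TYPE('a::field) m n tt"
  shows "(Lmult m n tt (ebas one_idx) g :: 'a lam) = g"
proof
  fix c
  have "(Lmult m n tt (ebas one_idx) g c :: 'a) = (\<Sum>b\<in>Vset TYPE('a) m n tt. ebas c b * g b)"
    unfolding Lmult_ebas_left[OF one_idx_Vset]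
    by (intro sum.cong) (auto simp: bmult_one_idx_left Vset_def ebas_def)
  also have "\<dots> = g c" using assms[of c] finite_Vset by (subst sum_ebas_mult) auto
  finally show "(Lmult m n tt (ebas one_idx) g c :: 'a) = g c" .
qed

lemma Lmult_one_idx_right:
  assumes "b \<in> Vset TYPE('a::field) m n tt"
  shows "(Lmult m n tt (ebas b) (ebas one_idx) :: 'a lam) = ebas b"
  using Lmult_ebas_ebas[OF assms one_idx_Vset] bmult_one_idx_right assms by (simp add: Vset_def)

section \<open>The bracket of \<open>W(m,n;t)\<close>\<close>

lemma sum_fun_apply: "(\<Sum>i\<in>S. f i) x = (\<Sum>i\<in>S. f i x)"
  by (induction S rule: infinite_finite_induct) auto

lemma Wbr_apply:
  "(Wbr m n tt w z r x :: 'a::field) = (\<Sum>i\<in>Y m n. \<Sum>a\<in>Vset TYPE('a) m n tt. \<Sum>j\<in>Y m n. \<Sum>b\<in>Vset TYPE('a) m n tt.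
      w i a * z j b * bbr m n tt i a j b r x)"
  unfolding Wbr_def wsmult_def by (simp add: sum_fun_apply)

lemma Wbr_smult_left: "(Wbr m n tt (c \<cdot>w w) z :: 'a::field witt) = c \<cdot>w Wbr m n tt w z"
  by (auto simp: fun_eq_iff Wbr_apply wsmult_def algebra_simps sum_distrib_left)

lemma Wbr_smult_right: "(Wbr m n tt z (c \<cdot>w w) :: 'a::field witt) = c \<cdot>w Wbr m n tt z w"
  by (auto simp: fun_eq_iff Wbr_apply wsmult_def algebra_simps sum_distrib_left)

lemma Wbr_zero_left [simp]: "(Wbr m n tt 0 z :: 'a::field witt) = 0"
  by (auto simp: fun_eq_iff Wbr_apply)

lemma Wbr_uminus_left: "(Wbr m n tt (- w) z :: 'a::field witt) = - Wbr m n tt w z"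
  by (auto simp: fun_eq_iff Wbr_apply sum_negf)

lemma Wbr_uminus_right: "(Wbr m n tt z (- w) :: 'a::field witt) = - Wbr m n tt z w"
  by (auto simp: fun_eq_iff Wbr_apply sum_negf)

lemma Wbr_diff_left: "(Wbr m n tt (w1 - w2) z :: 'a::field witt) = Wbr m n tt w1 z - Wbr m n tt w2 z"
  by (auto simp: fun_eq_iff Wbr_apply algebra_simps sum_subtractf)

lemma Wbr_diff_right: "(Wbr m n tt z (w1 - w2) :: 'a::field witt) = Wbr m n tt z w1 - Wbr m n tt z w2"
  by (auto simp: fun_eq_iff Wbr_apply algebra_simps sum_subtractf)

lemma bbr_swap:
  "(bbr m n tt i a j b r x :: 'a::field) =
     - ((-1) ^ ((card (snd a) + tau m i) * (card (snd b) + tau m j)) * bbr m n tt j b i a r x)"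
proof -
  let ?k = "(card (snd a) + tau m i) * (card (snd b) + tau m j)"
  have k: "(card (snd b) + tau m j) * (card (snd a) + tau m i) = ?k" by simp
  have s: "((-1::'a) ^ ?k) * (-1) ^ ?k = 1" by (simp flip: power_add)
  show ?thesis
    by (cases "r = i"; cases "r = j")
      (simp_all add: bbr_def lsmult_def k algebra_simps mult.assoc[symmetric] s)
qed

lemma Wbr_skew:
  assumes "(X :: 'a::field witt) \<in> Wpar m p" and "Z \<in> Wpar m q"
  shows "Wbr m n tt X Z = - (((-1) ^ (p * q)) \<cdot>w Wbr m n tt Z X)"
proof (intro ext)
  fix r x
  let ?V = "Vset TYPE('a) m n tt" and ?Y = "Y m n"
  have term_swap: "X i a * Z j b * bbr m n tt i a j b r x
      = - ((-1) ^ (p * q) * (Z j b * X i a * bbr m n tt j b i a r x))" for i a j b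
  proof (cases "X i a = 0 \<or> Z j b = 0")
    case False
    then have "(card (snd a) + tau m i) mod 2 = p" "(card (snd b) + tau m j) mod 2 = q"
      using assms unfolding Wpar_def by blast+
    then have "even (card (snd a) + tau m i) = even p" "even (card (snd b) + tau m j) = even q"
      by presburger+
    then have "((-1::'a) ^ ((card (snd a) + tau m i) * (card (snd b) + tau m j))) = (-1) ^ (p * q)"
      by (simp add: minus_one_power_iff)
    then show ?thesis by (subst bbr_swap) (simp add: algebra_simps)
  qed auto
  have "Wbr m n tt X Z r x = (\<Sum>i\<in>?Y. \<Sum>a\<in>?V. \<Sum>j\<in>?Y. \<Sum>b\<in>?V.
      - ((-1) ^ (p * q) * (Z j b * X i a * bbr m n tt j b i a r x)))"
    by (simp add: Wbr_apply term_swap)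
  also have "\<dots> = (\<Sum>j\<in>?Y. \<Sum>b\<in>?V. \<Sum>i\<in>?Y. \<Sum>a\<in>?V.
      - ((-1) ^ (p * q) * (Z j b * X i a * bbr m n tt j b i a r x)))"
    by (subst sum.swap, subst (2) sum.swap, rule sum.cong[OF refl],
        subst sum.swap, rule sum.cong[OF refl], rule sum.swap)
  also have "\<dots> = - ((-1) ^ (p * q) * Wbr m n tt Z X r x)"
    by (simp add: Wbr_apply sum_negf sum_distrib_left)
  finally show "Wbr m n tt X Z r x = (- (((-1) ^ (p * q)) \<cdot>w Wbr m n tt Z X)) r x"
    by (simp add: wsmult_def)
qed

text \<open>The degree of \<open>x\<^sup>a D\<^sub>q\<close> in the variable \<open>x\<^sub>t\<close>, where \<open>D\<^sub>q\<close> counts as \<open>x\<^sub>q\<^sup>-\<^sup>1\<close>.\<close>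

definition vf_degree :: "nat \<Rightarrow> nat \<Rightarrow> idx \<Rightarrow> int" where
  "vf_degree t q a = int (var_degree t a) - (if t = q then 1 else 0)"

lemma vf_degree_Lmult_Dbas:
  assumes "a \<in> Vset TYPE('a::field) m n tt"
    and "(Lmult m n tt (ebas a) (Dbas m i b) x :: 'a) \<noteq> 0"
  shows "x \<in> Vset TYPE('a) m n tt" "vf_degree t j x = vf_degree t i a + vf_degree t j b"
proof -
  obtain c where c: "(Dbas m i b c :: 'a) \<noteq> 0" and bm: "(bmult m n tt a c x :: 'a) \<noteq> 0"
    using Lmult_ebas_nonzeroD[OF assms] .
  show "x \<in> Vset TYPE('a) m n tt" using bmult_nonzeroD(3)[OF bm] by (simp add: Vset_def)
  show "vf_degree t j x = vf_degree t i a + vf_degree t j b"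
    using var_degree_bmult[OF bm, of t] var_degree_Dbas[OF c, of t] by (simp add: vf_degree_def)
qed

lemma vf_degree_bbr:
  assumes "a \<in> Vset TYPE('a::field) m n tt" "b \<in> Vset TYPE('a) m n tt"
    and "(bbr m n tt i a j b r x :: 'a) \<noteq> 0"
  shows "r \<in> {i, j}" "x \<in> Vset TYPE('a) m n tt"
    "vf_degree t r x = vf_degree t i a + vf_degree t j b"
proof -
  have "r = j \<and> (Lmult m n tt (ebas a) (Dbas m i b) x :: 'a) \<noteq> 0
      \<or> r = i \<and> (Lmult m n tt (ebas b) (Dbas m j a) x :: 'a) \<noteq> 0"
    using assms(3) unfolding bbr_def lsmult_def by (auto split: if_splits)
  then have "r \<in> {i, j} \<and> x \<in> Vset TYPE('a) m n tt \<and> vf_degree t r x = vf_degree t i a + vf_degree t j b"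
    by (elim disjE conjE) (use vf_degree_Lmult_Dbas[OF assms(1)] vf_degree_Lmult_Dbas[OF assms(2)] in auto)
  then show "r \<in> {i, j}" "x \<in> Vset TYPE('a) m n tt"
    "vf_degree t r x = vf_degree t i a + vf_degree t j b" by auto
qed

definition W_supported :: "nat \<Rightarrow> nat \<Rightarrow> (nat \<Rightarrow> nat) \<Rightarrow> ('a::field) witt \<Rightarrow> bool" where
  "W_supported m n tt w \<longleftrightarrow> (\<forall>i a. w i a \<noteq> 0 \<longrightarrow> i \<in> Y m n \<and> a \<in> Vset TYPE('a) m n tt)"

lemma W_supported_Wbr: "W_supported m n tt (Wbr m n tt w z :: 'a::field witt)"
  unfolding W_supported_def
proof (intro allI impI)
  fix r x assume "(Wbr m n tt w z r x :: 'a) \<noteq> 0"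
  then obtain i where "i \<in> Y m n" and
    "(\<Sum>a\<in>Vset TYPE('a) m n tt. \<Sum>j\<in>Y m n. \<Sum>b\<in>Vset TYPE('a) m n tt.
        w i a * z j b * bbr m n tt i a j b r x) \<noteq> 0"
    unfolding Wbr_apply using sum.not_neutral_contains_not_neutral by blast
  then obtain a where "a \<in> Vset TYPE('a) m n tt" and
    "(\<Sum>j\<in>Y m n. \<Sum>b\<in>Vset TYPE('a) m n tt. w i a * z j b * bbr m n tt i a j b r x) \<noteq> 0"
    using sum.not_neutral_contains_not_neutral by blast
  then obtain j where "j \<in> Y m n" and
    "(\<Sum>b\<in>Vset TYPE('a) m n tt. w i a * z j b * bbr m n tt i a j b r x) \<noteq> 0"
    using sum.not_neutral_contains_not_neutral by blast
  then obtain b where "b \<in> Vset TYPE('a) m n tt" and "w i a * z j b * bbr m n tt i a j b r x \<noteq> 0"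
    using sum.not_neutral_contains_not_neutral by blast
  note ij = \<open>i \<in> Y m n\<close> \<open>j \<in> Y m n\<close>
  note ab = \<open>a \<in> Vset TYPE('a) m n tt\<close> \<open>b \<in> Vset TYPE('a) m n tt\<close>
  from \<open>w i a * z j b * bbr m n tt i a j b r x \<noteq> 0\<close> have "(bbr m n tt i a j b r x :: 'a) \<noteq> 0" by simp
  with vf_degree_bbr(1,2)[OF ab this] ij show "r \<in> Y m n \<and> x \<in> Vset TYPE('a) m n tt" by auto
qed

lemma W_supported_lspan:
  assumes "\<And>w. w \<in> S \<Longrightarrow> W_supported m n tt (w :: 'a::field witt)" "v \<in> lspan S"
  shows "W_supported m n tt v"
  unfolding W_supported_def
proof (intro allI impI)
  fix i a assume "v i a \<noteq> 0"
  from assms(2) obtain F c where F: "finite F" "F \<subseteq> S" "v = (\<Sum>u\<in>F. c u \<cdot>w u)"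
    by (auto simp: lspan_def)
  with \<open>v i a \<noteq> 0\<close> have "(\<Sum>u\<in>F. c u * u i a) \<noteq> 0" by (simp add: sum_fun_apply wsmult_def)
  then obtain u where "u \<in> F" "c u * u i a \<noteq> 0" by (meson sum.not_neutral_contains_not_neutral)
  then have "W_supported m n tt u" "u i a \<noteq> 0" using F(2) assms(1) by auto
  then show "i \<in> Y m n \<and> a \<in> Vset TYPE('a) m n tt" unfolding W_supported_def by blast
qed

lemma W_supported_Hset: "w \<in> Hset m n tt \<Longrightarrow> W_supported m n tt (w :: 'a::field witt)"
  unfolding Hset_def by (rule W_supported_lspan) (auto intro: W_supported_Wbr)

definition Wbasis :: "nat \<Rightarrow> idx \<Rightarrow> ('a::field) witt" where
  "Wbasis q b = (\<lambda>i. if i = q then ebas b else 0)"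

lemma sum_Wbasis_mult:
  assumes "p \<in> Y m n" "c \<in> Vset TYPE('a::field) m n tt"
  shows "(\<Sum>i\<in>Y m n. \<Sum>a\<in>Vset TYPE('a) m n tt. (Wbasis p c i a :: 'a) * G i a) = G p c"
proof -
  have "(\<Sum>i\<in>Y m n. \<Sum>a\<in>Vset TYPE('a) m n tt. (Wbasis p c i a :: 'a) * G i a)
      = (\<Sum>i\<in>Y m n. if i = p then (\<Sum>a\<in>Vset TYPE('a) m n tt. ebas c a * G i a) else 0)"
    by (intro sum.cong) (auto simp: Wbasis_def)
  also have "\<dots> = (\<Sum>a\<in>Vset TYPE('a) m n tt. ebas c a * G p a)"
    using assms(1) finite_Y by (simp add: sum.delta')
  also have "\<dots> = G p c" using assms(2) finite_Vset by (subst sum_ebas_mult) auto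
  finally show ?thesis .
qed

lemma Wbr_Wbasis_left:
  assumes "p \<in> Y m n" "c \<in> Vset TYPE('a::field) m n tt"
  shows "(Wbr m n tt (Wbasis p c) X r x :: 'a) =
    (\<Sum>q\<in>Y m n. \<Sum>b\<in>Vset TYPE('a) m n tt. X q b * bbr m n tt p c q b r x)"
proof -
  have "(Wbr m n tt (Wbasis p c) X r x :: 'a) = (\<Sum>i\<in>Y m n. \<Sum>a\<in>Vset TYPE('a) m n tt. Wbasis p c i a *
     (\<Sum>q\<in>Y m n. \<Sum>b\<in>Vset TYPE('a) m n tt. X q b * bbr m n tt i a q b r x))"
    by (simp add: Wbr_apply sum_distrib_left mult.assoc)
  also have "\<dots> = (\<Sum>q\<in>Y m n. \<Sum>b\<in>Vset TYPE('a) m n tt. X q b * bbr m n tt p c q b r x)"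
    using assms by (rule sum_Wbasis_mult)
  finally show ?thesis .
qed

lemma sum_if_ebas:
  "(\<Sum>q\<in>Y m n. \<Sum>b\<in>Vset TYPE('a::field) m n tt. (if r = q then F q b * (ebas b x :: 'a) else 0)) =
    (if r \<in> Y m n \<and> x \<in> Vset TYPE('a) m n tt then F r x else 0)"
proof -
  have "(\<Sum>q\<in>Y m n. \<Sum>b\<in>Vset TYPE('a) m n tt. (if r = q then F q b * (ebas b x :: 'a) else 0)) =
     (\<Sum>q\<in>Y m n. if r = q then (\<Sum>b\<in>Vset TYPE('a) m n tt. (if x = b then F q b else 0)) else 0)"
    by (intro sum.cong) (auto simp: ebas_def intro!: sum.cong)
  also have "\<dots> = (if r \<in> Y m n \<and> x \<in> Vset TYPE('a) m n tt then F r x else 0)"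
    by (simp add: sum.delta sum.delta' finite_Vset finite_Y)
  finally show ?thesis .
qed

lemma Wbr_Wbasis_one:
  assumes "j \<in> Y m n"
  shows "(Wbr m n tt (Wbasis j one_idx) X r x :: 'a::field) = (if r \<in> Y m n then Dop m n tt j (X r) x else 0)"
proof -
  have "(bbr m n tt j one_idx q b r x :: 'a) = (if r = q then Dbas m j b x else 0)"
    if "b \<in> Vset TYPE('a) m n tt" for q b
  proof -
    have "(Lmult m n tt (ebas one_idx) (Dbas m j b) :: 'a lam) = Dbas m j b"
      by (rule Lmult_one_idx_left) (use Dbas_nonzero_Vset[OF that] in blast)
    then show ?thesis unfolding bbr_def by (simp add: lsmult_def)
  qed
  then have "(Wbr m n tt (Wbasis j one_idx) X r x :: 'a) =
     (\<Sum>q\<in>Y m n. if r = q then (\<Sum>b\<in>Vset TYPE('a) m n tt. X q b * Dbas m j b x) else 0)"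
    unfolding Wbr_Wbasis_left[OF assms one_idx_Vset] by (intro sum.cong refl) auto
  also have "\<dots> = (if r \<in> Y m n then Dop m n tt j (X r) x else 0)"
    using finite_Y by (simp add: sum.delta Dop_def)
  finally show ?thesis .
qed

lemma Lmult_gen_idx_Dbas_Y1:
  assumes p: "p \<in> Y1 m n" and b: "b \<in> Vset TYPE('a::field) m n tt"
  shows "(Lmult m n tt (ebas (gen_idx m p)) (Dbas m p b) :: 'a lam) = lsmult (of_nat (var_degree p b)) (ebas b)"
proof -
  have bv: "valid_idx TYPE('a) m n tt b" using b by (simp add: Vset_def)
  have p0: "p \<notin> Y0 m" using p by (simp add: Y1_iff)
  then have fb: "fst b p = 0" using bv by (simp add: valid_idx_def)
  show ?thesis
  proof (cases "p \<in> snd b")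
    case False
    then show ?thesis using p0 fb by (simp add: Dbas_def var_degree_def)
  next
    case True
    let ?b' = "(fst b, snd b - {p})"
    let ?s = "(-1::'a) ^ card {j \<in> snd b. j < p}"
    have D: "(Dbas m p b :: 'a lam) = lsmult ?s (ebas ?b')" using True p0 by (simp add: Dbas_def)
    have gv: "gen_idx m p \<in> Vset TYPE('a) m n tt"
      using p p0 by (auto simp: gen_idx_def Vset_def valid_idx_def)
    have b'v: "?b' \<in> Vset TYPE('a) m n tt" using bv by (auto simp: Vset_def valid_idx_def)
    have sum_eq: "(\<lambda>j. fst (gen_idx m p) j + fst ?b' j, snd (gen_idx m p) \<union> snd ?b') = b"
      using True p0 by (intro prod_eqI) (auto simp: gen_idx_def insert_absorb)
    have binom: "(\<Prod>j\<in>Y0 m. (of_nat ((fst (gen_idx m p) j + fst ?b' j) choose fst (gen_idx m p) j) :: 'a)) = 1"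
      using p0 by (intro prod.neutral) (auto simp: gen_idx_def)
    have "{(i, j). i \<in> {p} \<and> j \<in> snd b - {p} \<and> j < i} = Pair p ` {j \<in> snd b. j < p}" by auto
    then have sign: "card {(i, j). i \<in> snd (gen_idx m p) \<and> j \<in> snd ?b' \<and> j < i} = card {j \<in> snd b. j < p}"
      using p0 by (simp add: gen_idx_def card_image inj_on_def)
    have "(Lmult m n tt (ebas (gen_idx m p)) (Dbas m p b) :: 'a lam) = lsmult ?s (bmult m n tt (gen_idx m p) ?b')"
      using D Lmult_ebas_ebas[OF gv b'v] by (simp add: Lmult_lsmult_right)
    also have "bmult m n tt (gen_idx m p) ?b' = lsmult ?s (ebas b)"
      unfolding bmult_def Let_def sum_eq using bv p0 binom sign by (simp add: gen_idx_def)
    finally show ?thesis using True fb by (simp add: var_degree_def flip: power_add)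
  qed
qed

lemma DH_ebas:
  assumes "g \<in> Vset TYPE('a::field) m n tt"
  shows "(DH m n tt (ebas g) :: 'a witt) i = (if i \<in> Y m n then
    lsmult (of_int (sig m (pr m n i)) * (-1) ^ (tau m (pr m n i) * dL (ebas g :: 'a lam))) (Dbas m (pr m n i) g)
    else 0)"
  using assms by (simp add: DH_def Dop_ebas)

lemma DH_ebas_nonzeroD:
  assumes "g \<in> Vset TYPE('a::field) m n tt" and "(DH m n tt (ebas g) :: 'a witt) r x \<noteq> 0"
  shows "r \<in> Y m n" "(Dbas m (pr m n r) g x :: 'a) \<noteq> 0"
  using assms(2) by (auto simp: DH_ebas[OF assms(1)] lsmult_def split: if_splits)

lemma DH_lsmult:
  assumes "c \<noteq> 0"
  shows "(DH m n tt (lsmult c f) :: 'a::field witt) = c \<cdot>w DH m n tt f"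
  unfolding DH_def dL_lsmult[OF assms] Dop_lsmult by (auto simp: wsmult_def lsmult_def fun_eq_iff algebra_simps)

lemma Wbasis_one_Wpar: "(Wbasis j one_idx :: 'a::field witt) \<in> Wpar m (tau m j)"
  by (auto simp: Wpar_def Wbasis_def ebas_def one_idx_def tau_def split: if_splits)

lemma one_wsmult [simp]: "(1::'a::field) \<cdot>w w = w"
  by (simp add: wsmult_def)

lemma zero_wsmult [simp]: "(0::'a::field) \<cdot>w w = 0"
  by (simp add: wsmult_def fun_eq_iff)

lemma wsmult_zero_right [simp]: "c \<cdot>w (0 :: 'a::field witt) = 0"
  by (simp add: wsmult_def fun_eq_iff)

lemma wsmult_eq_0_iff [simp]: "c \<cdot>w w = 0 \<longleftrightarrow> c = 0 \<or> w = (0 :: 'a::field witt)"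
  by (auto simp: wsmult_def fun_eq_iff)

lemma wsmult_wsmult [simp]: "a \<cdot>w (b \<cdot>w w) = (a * b) \<cdot>w (w :: 'a::field witt)"
  by (simp add: wsmult_def mult.assoc)

lemma wsmult_sum: "c \<cdot>w (\<Sum>v\<in>F. g v) = (\<Sum>v\<in>F. c \<cdot>w (g v :: 'a::field witt))"
  by (induction F rule: infinite_finite_induct) (simp_all add: wsmult_def fun_eq_iff distrib_left sum_fun_apply)

lemma witt_eq_0_if_eq_uminus:
  assumes "(2::'a::field) \<noteq> 0" and "(X :: 'a witt) = - X"
  shows "X = 0"
proof (intro ext)
  fix r x
  have "2 * X r x = 0" using fun_cong[OF fun_cong[OF assms(2)], of r x] by simp
  with assms(1) show "X r x = 0 r x" by simp
qed

lemma lspan_mem: "w \<in> S \<Longrightarrow> (w :: 'a::field witt) \<in> lspan S"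
  unfolding lspan_def by (intro CollectI exI[of _ "{w}"] exI[of _ "\<lambda>_. 1"]) auto

lemma lspan_smult:
  assumes "v \<in> lspan S" shows "c \<cdot>w v \<in> lspan S"
proof -
  from assms obtain F d where F: "finite F" "F \<subseteq> S" "v = (\<Sum>u\<in>F. d u \<cdot>w u)" by (auto simp: lspan_def)
  then have "c \<cdot>w v = (\<Sum>u\<in>F. (c * d u) \<cdot>w u)" by (simp add: wsmult_sum)
  with F show ?thesis unfolding lspan_def by (intro CollectI exI[of _ F] exI[of _ "\<lambda>u. c * d u"]) simp
qed

lemma Hbar_smult: "x \<in> Hbar m n tt \<Longrightarrow> c \<cdot>w x \<in> Hbar m n tt"
  unfolding Hbar_def by (rule lspan_smult)

lemma Hset_smult: "x \<in> Hset m n tt \<Longrightarrow> c \<cdot>w x \<in> Hset m n tt"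
  unfolding Hset_def by (rule lspan_smult)

lemma Wbr_in_Hset: "x \<in> Hbar m n tt \<Longrightarrow> y \<in> Hbar m n tt \<Longrightarrow> (Wbr m n tt x y :: 'a::field witt) \<in> Hset m n tt"
  unfolding Hset_def by (rule lspan_mem) blast

lemma DH_ebas_Hbar:
  assumes "g \<in> Vset TYPE('a::field) m n tt"
  shows "(DH m n tt (ebas g) :: 'a witt) \<in> Hbar m n tt"
proof -
  have "(ebas g :: 'a lam) \<in> Lam m n tt" using assms by (auto simp: Lam_def ebas_def Vset_def)
  moreover have "homogL (ebas g :: 'a lam)" unfolding homogL_def by (auto simp: ebas_def)
  ultimately show ?thesis unfolding Hbar_def by (intro lspan_mem) blast
qed

definition raise_idx :: "nat \<Rightarrow> idx \<Rightarrow> idx" where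
  "raise_idx j g = ((fst g)(j := Suc (fst g j)), snd g)"

lemma snd_raise_idx [simp]: "snd (raise_idx j g) = snd g"
  by (simp add: raise_idx_def)

lemma Dbas_raise_idx_self: "j \<in> Y0 m \<Longrightarrow> (Dbas m j (raise_idx j g) :: 'a::field lam) = ebas g"
  by (simp add: Dbas_def raise_idx_def)

lemma Vset_of_raise_idx:
  assumes "j \<in> Y0 m" "raise_idx j g \<in> Vset TYPE('a::field) m n tt"
  shows "g \<in> Vset TYPE('a) m n tt"
  using Dbas_nonzero_Vset[OF assms(2), of j g] by (simp add: Dbas_raise_idx_self[OF assms(1)] ebas_def)

lemma Dop_Dbas_raise_idx:
  assumes j: "j \<in> Y0 m" and gp: "raise_idx j g \<in> Vset TYPE('a::field) m n tt"
  shows "(Dop m n tt j (Dbas m q (raise_idx j g)) :: 'a lam) = Dbas m q g"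
proof -
  have lower: "Dop m n tt j (lsmult c (ebas (raise_idx j y))) = (lsmult c (ebas y) :: 'a lam)"
    if "Dbas m q (raise_idx j g) = (lsmult c (ebas (raise_idx j y)) :: 'a lam)" "c \<noteq> 0" for c y
  proof -
    have "raise_idx j y \<in> Vset TYPE('a) m n tt"
      using Dbas_nonzero_Vset[OF gp, of q "raise_idx j y"] that by (simp add: lsmult_def ebas_def)
    then show ?thesis by (simp add: Dop_lsmult Dop_ebas Dbas_raise_idx_self[OF j])
  qed
  consider "q = j" | "q \<noteq> j" "q \<in> Y0 m" "fst g q \<noteq> 0" | "q \<notin> Y0 m" "q \<in> snd g"
    | "q \<noteq> j" "q \<in> Y0 m" "fst g q = 0" | "q \<notin> Y0 m" "q \<notin> snd g"
    by blast
  then show ?thesis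
  proof cases
    case 1
    with Vset_of_raise_idx[OF j gp] show ?thesis by (simp add: Dbas_raise_idx_self[OF j] Dop_ebas)
  next
    case 2
    let ?y = "((fst g)(q := fst g q - 1), snd g)"
    have D: "(Dbas m q (raise_idx j g) :: 'a lam) = lsmult 1 (ebas (raise_idx j ?y))"
      using 2 by (simp add: Dbas_def raise_idx_def fun_upd_twist)
    from lower[OF D] 2 show ?thesis by (simp only: D) (simp add: Dbas_def)
  next
    case 3
    let ?y = "(fst g, snd g - {q})"
    have D: "(Dbas m q (raise_idx j g) :: 'a lam) = lsmult ((-1) ^ card {i \<in> snd g. i < q}) (ebas (raise_idx j ?y))"
      using 3 by (simp add: Dbas_def raise_idx_def)
    from lower[OF D] 3 show ?thesis by (simp only: D) (simp add: Dbas_def)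
  qed (simp_all add: Dbas_def raise_idx_def)
qed

lemma Wbr_Wbasis_one_DH_raise_idx:
  assumes j: "j \<in> Y0 m" and gp: "raise_idx j g \<in> Vset TYPE('a::field) m n tt"
  shows "Wbr m n tt (Wbasis j one_idx) (DH m n tt (ebas (raise_idx j g))) = (DH m n tt (ebas g) :: 'a witt)"
proof (intro ext)
  fix r x
  have "j \<in> Y m n" using j Y0_subset_Y by blast
  then show "Wbr m n tt (Wbasis j one_idx) (DH m n tt (ebas (raise_idx j g))) r x = (DH m n tt (ebas g) :: 'a witt) r x"
    by (simp add: Wbr_Wbasis_one DH_ebas[OF gp] DH_ebas[OF Vset_of_raise_idx[OF j gp]] Dop_lsmult
        Dop_Dbas_raise_idx[OF j gp] dL_ebas)
qed

lemma Dop_eq_single: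
  assumes "x \<in> Vset TYPE('a::field) m n tt"
    and "\<And>b. b \<in> Vset TYPE('a) m n tt \<Longrightarrow> b \<noteq> x \<Longrightarrow> (Dbas m t b y :: 'a) = 0"
  shows "(Dop m n tt t f y :: 'a) = f x * Dbas m t x y"
proof -
  have "(\<Sum>b\<in>Vset TYPE('a) m n tt - {x}. f b * Dbas m t b y) = (0 :: 'a)"
    using assms(2) by (intro sum.neutral) auto
  then show ?thesis unfolding Dop_def using assms(1) finite_Vset by (subst sum.remove) auto
qed

lemma Dop_lower_Y0:
  assumes t: "t \<in> Y0 m" and x: "x \<in> Vset TYPE('a::field) m n tt" and nz: "fst x t \<noteq> 0"
  shows "(Dop m n tt t f ((fst x)(t := fst x t - 1), snd x) :: 'a) = f x"
proof -
  have raise_lower: "raise_idx t ((fst b)(t := fst b t - 1), snd b) = b" if "fst b t \<noteq> 0" for b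
    using that by (simp add: raise_idx_def)
  have "(Dbas m t b ((fst x)(t := fst x t - 1), snd x) :: 'a) = 0" if "b \<noteq> x" for b
  proof (rule ccontr)
    assume "(Dbas m t b ((fst x)(t := fst x t - 1), snd x) :: 'a) \<noteq> 0"
    then have "fst b t \<noteq> 0" "((fst b)(t := fst b t - 1), snd b) = ((fst x)(t := fst x t - 1), snd x)"
      using t by (auto simp: Dbas_def ebas_def split: if_splits)
    then have "b = x" using raise_lower[of b] raise_lower[of x] nz by metis
    with that show False ..
  qed
  then show ?thesis using t nz by (subst Dop_eq_single[OF x]) (auto simp: Dbas_def ebas_def)
qed

lemma Dop_lower_Y1:
  assumes t: "t \<notin> Y0 m" and x: "x \<in> Vset TYPE('a::field) m n tt" and tin: "t \<in> snd x"
  shows "(Dop m n tt t f (fst x, snd x - {t}) :: 'a) = (-1) ^ card {j \<in> snd x. j < t} * f x"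
proof -
  have "(Dbas m t b (fst x, snd x - {t}) :: 'a) = 0" if "b \<noteq> x" for b
  proof (rule ccontr)
    assume "(Dbas m t b (fst x, snd x - {t}) :: 'a) \<noteq> 0"
    then have "t \<in> snd b" "fst b = fst x" "snd b - {t} = snd x - {t}"
      using t by (auto simp: Dbas_def ebas_def lsmult_def split: if_splits)
    with tin have "b = x" by (metis insert_Diff prod_eqI)
    with that show False ..
  qed
  then show ?thesis using t tin by (subst Dop_eq_single[OF x]) (auto simp: Dbas_def ebas_def lsmult_def)
qed

section \<open>The torus of \<open>H\<close>\<close>

definition pair_idx :: "nat \<Rightarrow> nat \<Rightarrow> nat \<Rightarrow> idx" where
  "pair_idx m n l = (if l \<in> Y0 m then ((\<lambda>j. 0)(l := 1, pr m n l := 1), {}) else ((\<lambda>j. 0), {l, pr m n l}))"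

definition pair_sign :: "nat \<Rightarrow> nat \<Rightarrow> nat \<Rightarrow> 'a::field" where
  "pair_sign m n l = (if l \<notin> Y0 m \<and> pr m n l < l then -1 else 1)"

abbreviation torus :: "nat \<Rightarrow> nat \<Rightarrow> (nat \<Rightarrow> nat) \<Rightarrow> nat \<Rightarrow> ('a::field) witt" where
  "torus m n tt l \<equiv> DH m n tt (Lmult m n tt (xg m l) (xg m (pr m n l)))"

definition ad_weight :: "nat \<Rightarrow> nat \<Rightarrow> nat \<Rightarrow> nat \<Rightarrow> idx \<Rightarrow> 'a::field" where
  "ad_weight m n l q a = of_int (sig m l * (vf_degree (pr m n l) q a - vf_degree l q a))"

lemma ad_weight_times_bbr:
  assumes "i \<in> Y m n" "j \<in> Y m n" "a \<in> Vset TYPE('a::field) m n tt" "b \<in> Vset TYPE('a) m n tt"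
  shows "(if r \<in> Y m n \<and> x \<in> Vset TYPE('a) m n tt then ad_weight m n l r x * bbr m n tt i a j b r x else 0)
    = (ad_weight m n l i a + ad_weight m n l j b) * (bbr m n tt i a j b r x :: 'a)"
proof (cases "(bbr m n tt i a j b r x :: 'a) = 0")
  case False
  have "sig m l * (vf_degree (pr m n l) r x - vf_degree l r x) =
      sig m l * (vf_degree (pr m n l) i a - vf_degree l i a) + sig m l * (vf_degree (pr m n l) j b - vf_degree l j b)"
    using vf_degree_bbr(3)[OF assms(3,4) False, of l] vf_degree_bbr(3)[OF assms(3,4) False, of "pr m n l"]
    by (simp add: algebra_simps)
  then have "(ad_weight m n l r x :: 'a) = ad_weight m n l i a + ad_weight m n l j b"
    unfolding ad_weight_def by (metis of_int_add)
  with vf_degree_bbr(1,2)[OF assms(3,4) False] assms(1,2) show ?thesis by auto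
qed simp

context
  fixes m n :: nat and tt :: "nat \<Rightarrow> nat"
  assumes char_gt_2: "CHAR('a::field) > 2" and tt_pos: "\<forall>j\<in>Y0 m. tt j > 0"
begin

lemma Lmult_gen_idx_Dbas_Y0:
  assumes p: "p \<in> Y0 m" and b: "b \<in> Vset TYPE('a) m n tt"
  shows "(Lmult m n tt (ebas (gen_idx m p)) (Dbas m p b) :: 'a lam) = lsmult (of_nat (var_degree p b)) (ebas b)"
proof -
  have bv: "valid_idx TYPE('a) m n tt b" using b by (simp add: Vset_def)
  then have p_notin: "p \<notin> snd b" using p by (auto simp: valid_idx_def Y1_iff)
  show ?thesis
  proof (cases "fst b p = 0")
    case True
    then show ?thesis using p p_notin by (simp add: Dbas_def var_degree_def)
  next
    case False
    let ?b' = "((fst b)(p := fst b p - 1), snd b)"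
    have D: "(Dbas m p b :: 'a lam) = ebas ?b'" using False p by (simp add: Dbas_def)
    then have b'v: "?b' \<in> Vset TYPE('a) m n tt" using Dbas_nonzero_Vset[OF b] by (metis ebas_def one_neq_zero)
    have gv: "gen_idx m p \<in> Vset TYPE('a) m n tt"
      using gen_idx_Vset[OF char_gt_2 tt_pos] p Y0_subset_Y by blast
    have sum_eq: "(\<lambda>j. fst (gen_idx m p) j + fst ?b' j, snd (gen_idx m p) \<union> snd ?b') = b"
      using False p by (intro prod_eqI) (auto simp: gen_idx_def fun_eq_iff)
    have binom: "(\<Prod>j\<in>Y0 m. (of_nat ((fst (gen_idx m p) j + fst ?b' j) choose fst (gen_idx m p) j) :: 'a))
        = (\<Prod>j\<in>Y0 m. if j = p then of_nat (fst b p) else 1)"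
      using False p by (intro prod.cong) (auto simp: gen_idx_def)
    have "(Lmult m n tt (ebas (gen_idx m p)) (Dbas m p b) :: 'a lam) = bmult m n tt (gen_idx m p) ?b'"
      using D Lmult_ebas_ebas[OF gv b'v] by simp
    also have "\<dots> = lsmult (of_nat (fst b p)) (ebas b)"
      unfolding bmult_def Let_def sum_eq using bv p binom by (simp add: gen_idx_def Y0_def)
    finally show ?thesis using p_notin by (simp add: var_degree_def)
  qed
qed

lemma Lmult_gen_idx_Dbas:
  assumes "p \<in> Y m n" "b \<in> Vset TYPE('a) m n tt"
  shows "(Lmult m n tt (ebas (gen_idx m p)) (Dbas m p b) :: 'a lam) = lsmult (of_nat (var_degree p b)) (ebas b)"
  using Lmult_gen_idx_Dbas_Y0 Lmult_gen_idx_Dbas_Y1 assms Y1_iff by blast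

lemma bbr_gen_idx:
  assumes "p \<in> Y m n" "b \<in> Vset TYPE('a) m n tt"
  shows "(bbr m n tt p (gen_idx m p) q b r x :: 'a) = (if r = q then of_int (vf_degree p r b) * ebas b x else 0)"
proof -
  have "even (card (snd (gen_idx m p)) + tau m p)" by (auto simp: gen_idx_def tau_def)
  then have "((-1::'a) ^ ((card (snd (gen_idx m p)) + tau m p) * k)) = 1" for k
    by (simp add: minus_one_power_iff)
  then have "(bbr m n tt p (gen_idx m p) q b r x :: 'a) =
     (if r = q then of_nat (var_degree p b) * ebas b x else 0) - (if r = p \<and> q = p then ebas b x else 0)"
    unfolding bbr_def using Lmult_gen_idx_Dbas[OF assms] Lmult_one_idx_right[OF assms(2)]
    by (simp add: Dbas_gen_idx lsmult_def)
  then show ?thesis by (cases "r = q"; cases "r = p") (simp_all add: vf_degree_def left_diff_distrib)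
qed

lemma Wbr_Wbasis_gen_idx:
  assumes p: "p \<in> Y m n"
  shows "(Wbr m n tt (Wbasis p (gen_idx m p)) X r x :: 'a) =
    (if r \<in> Y m n \<and> x \<in> Vset TYPE('a) m n tt then of_int (vf_degree p r x) * X r x else 0)"
proof -
  have gv: "gen_idx m p \<in> Vset TYPE('a) m n tt" using gen_idx_Vset[OF char_gt_2 tt_pos p] .
  have "(Wbr m n tt (Wbasis p (gen_idx m p)) X r x :: 'a) =
     (\<Sum>q\<in>Y m n. \<Sum>b\<in>Vset TYPE('a) m n tt. (if r = q then (of_int (vf_degree p q b) * X q b) * ebas b x else 0))"
    unfolding Wbr_Wbasis_left[OF p gv] by (intro sum.cong refl) (auto simp: bbr_gen_idx[OF p])
  also have "\<dots> = (if r \<in> Y m n \<and> x \<in> Vset TYPE('a) m n tt then of_int (vf_degree p r x) * X r x else 0)"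
    by (rule sum_if_ebas)
  finally show ?thesis .
qed

context
  assumes even_m: "even m" and even_n: "even n"
begin

lemma pair_idx_Vset:
  assumes l: "l \<in> Y m n"
  shows "pair_idx m n l \<in> Vset TYPE('a) m n tt"
proof (cases "l \<in> Y0 m")
  case True
  then have "pr m n l \<in> Y0 m" using pr_in_Y0_iff[OF even_m even_n l] by simp
  with True have "piv TYPE('a) tt l \<ge> 2" "piv TYPE('a) tt (pr m n l) \<ge> 2"
    using piv_ge_2[OF char_gt_2] tt_pos by auto
  with True \<open>pr m n l \<in> Y0 m\<close> show ?thesis by (auto simp: pair_idx_def Vset_def valid_idx_def)
next
  case False
  then have "pr m n l \<notin> Y0 m" "pr m n l \<in> Y m n"
    using pr_in_Y0_iff[OF even_m even_n l] pr_in_Y[OF even_m even_n l] by auto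
  with False l show ?thesis by (auto simp: pair_idx_def Vset_def valid_idx_def Y1_iff)
qed

lemma Lmult_xg_pr:
  assumes l: "l \<in> Y m n"
  shows "(Lmult m n tt (xg m l) (xg m (pr m n l)) :: 'a lam) = lsmult (pair_sign m n l) (ebas (pair_idx m n l))"
proof -
  let ?l' = "pr m n l"
  have l': "?l' \<in> Y m n" "?l' \<noteq> l" "?l' \<in> Y0 m \<longleftrightarrow> l \<in> Y0 m"
    using pr_in_Y[OF even_m even_n l] pr_neq[OF even_m even_n l] pr_in_Y0_iff[OF even_m even_n l] by auto
  have valid: "valid_idx TYPE('a) m n tt (pair_idx m n l)" using pair_idx_Vset[OF l] by (simp add: Vset_def)
  have sum_eq: "(\<lambda>j. fst (gen_idx m l) j + fst (gen_idx m ?l') j, snd (gen_idx m l) \<union> snd (gen_idx m ?l'))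
      = pair_idx m n l"
    using l' by (auto simp: gen_idx_def pair_idx_def fun_eq_iff)
  have binom: "(\<Prod>j\<in>Y0 m. (of_nat ((fst (gen_idx m l) j + fst (gen_idx m ?l') j) choose fst (gen_idx m l) j) :: 'a)) = 1"
    using l' by (intro prod.neutral) (auto simp: gen_idx_def)
  have "{(i, j). i \<in> snd (gen_idx m l) \<and> j \<in> snd (gen_idx m ?l') \<and> j < i} =
      (if l \<notin> Y0 m \<and> ?l' < l then {(l, ?l')} else {})"
    using l' by (auto simp: gen_idx_def)
  then have sign: "(-1::'a) ^ card {(i, j). i \<in> snd (gen_idx m l) \<and> j \<in> snd (gen_idx m ?l') \<and> j < i}
      = pair_sign m n l"
    by (simp add: pair_sign_def)
  have "snd (gen_idx m l) \<inter> snd (gen_idx m ?l') = {}" using l' by (auto simp: gen_idx_def)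
  then have "(bmult m n tt (gen_idx m l) (gen_idx m ?l') :: 'a lam) = lsmult (pair_sign m n l) (ebas (pair_idx m n l))"
    unfolding bmult_def Let_def sum_eq using valid binom sign by simp
  then show ?thesis
    using Lmult_ebas_ebas[OF gen_idx_Vset[OF char_gt_2 tt_pos l] gen_idx_Vset[OF char_gt_2 tt_pos l'(1)]]
    by (simp add: xg_eq_ebas_gen_idx)
qed

lemma Dbas_pair_idx_Y0:
  assumes l: "l \<in> Y m n" and l0: "l \<in> Y0 m"
  shows "(Dbas m q (pair_idx m n l) :: 'a lam) =
    (if q = l then ebas (gen_idx m (pr m n l)) else if q = pr m n l then ebas (gen_idx m l) else 0)"
proof -
  let ?l' = "pr m n l"
  have l': "?l' \<noteq> l" "?l' \<in> Y0 m"
    using pr_neq[OF even_m even_n l] pr_in_Y0_iff[OF even_m even_n l] l0 by auto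
  have "((\<lambda>j::nat. 0::nat)(l := 1, ?l' := 1))(l := 0) = (\<lambda>j. 0)(?l' := 1)"
    "((\<lambda>j::nat. 0::nat)(l := 1, ?l' := 1))(?l' := 0) = (\<lambda>j. 0)(l := 1)"
    using l'(1) by (auto simp: fun_eq_iff)
  then show ?thesis using l0 l' by (auto simp: Dbas_def pair_idx_def gen_idx_def)
qed

lemma Dbas_pair_idx_Y1:
  assumes l: "l \<in> Y m n" and l0: "l \<notin> Y0 m"
  shows "(Dbas m q (pair_idx m n l) :: 'a lam) =
    (if q = l then lsmult ((-1) ^ (if pr m n l < l then 1 else 0)) (ebas (gen_idx m (pr m n l)))
     else if q = pr m n l then lsmult ((-1) ^ (if l < pr m n l then 1 else 0)) (ebas (gen_idx m l))
     else 0)"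
proof -
  let ?l' = "pr m n l"
  have l': "?l' \<noteq> l" "?l' \<notin> Y0 m"
    using pr_neq[OF even_m even_n l] pr_in_Y0_iff[OF even_m even_n l] l0 by auto
  have "{j \<in> {l, ?l'}. j < l} = (if ?l' < l then {?l'} else {})"
    "{j \<in> {l, ?l'}. j < ?l'} = (if l < ?l' then {l} else {})"
    "{l, ?l'} - {l} = {?l'}" "{l, ?l'} - {?l'} = {l}"
    using l'(1) by auto
  then show ?thesis using l0 l' by (auto simp: Dbas_def pair_idx_def gen_idx_def)
qed

lemma Dop_xg_xg_pr:
  assumes l: "l \<in> Y m n"
  shows "(Dop m n tt q (Lmult m n tt (xg m l) (xg m (pr m n l))) :: 'a lam) =
    (if q = l then xg m (pr m n l) else if q = pr m n l then lsmult ((-1) ^ tau m l) (xg m l) else 0)"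
proof -
  have l': "pr m n l \<noteq> l" using pr_neq[OF even_m even_n l] .
  have "(Dop m n tt q (Lmult m n tt (xg m l) (xg m (pr m n l))) :: 'a lam) =
      lsmult (pair_sign m n l) (Dbas m q (pair_idx m n l))"
    by (simp add: Lmult_xg_pr[OF l] Dop_lsmult Dop_ebas[OF pair_idx_Vset[OF l]])
  also have "\<dots> = (if q = l then xg m (pr m n l) else if q = pr m n l then lsmult ((-1) ^ tau m l) (xg m l) else 0)"
  proof (cases "l \<in> Y0 m")
    case True
    then show ?thesis using l' by (simp add: Dbas_pair_idx_Y0[OF l] pair_sign_def tau_def xg_eq_ebas_gen_idx)
  next
    case False
    have "pr m n l < l \<longleftrightarrow> \<not> l < pr m n l" using l' by auto
    then show ?thesis using False l'
      by (auto simp: Dbas_pair_idx_Y1[OF l] pair_sign_def tau_def xg_eq_ebas_gen_idx)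
  qed
  finally show ?thesis .
qed

lemma dL_xg_xg_pr:
  assumes l: "l \<in> Y m n"
  shows "dL (Lmult m n tt (xg m l) (xg m (pr m n l)) :: 'a lam) = 0"
proof -
  have "even (card (snd (pair_idx m n l)))"
    using pr_neq[OF even_m even_n l] by (auto simp: pair_idx_def)
  then show ?thesis by (simp add: Lmult_xg_pr[OF l] dL_lsmult dL_ebas pair_sign_def)
qed

lemma sig_pr_sign:
  assumes "l \<in> Y m n"
  shows "sig m (pr m n l) * (-1) ^ tau m l = - sig m l"
  using sig_pr_Y0[OF even_m even_n assms] sig_Y1[OF even_m even_n assms]
    sig_Y1[OF even_m even_n pr_in_Y[OF even_m even_n assms]] pr_in_Y0_iff[OF even_m even_n assms]
  by (auto simp: tau_def)

lemma torus_eq: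
  assumes l: "l \<in> Y m n"
  shows "(torus m n tt l :: 'a witt) =
    of_int (sig m l) \<cdot>w (Wbasis (pr m n l) (gen_idx m (pr m n l)) - Wbasis l (gen_idx m l))"
proof
  fix i
  have l': "pr m n l \<in> Y m n" "pr m n l \<noteq> l" using pr_in_Y[OF even_m even_n l] pr_neq[OF even_m even_n l] by auto
  show "(torus m n tt l :: 'a witt) i =
      (of_int (sig m l) \<cdot>w (Wbasis (pr m n l) (gen_idx m (pr m n l)) - Wbasis l (gen_idx m l))) i"
  proof (cases "i \<in> Y m n")
    case True
    have sign: "(of_int (sig m (pr m n l)) :: 'a) * (-1) ^ tau m l = - of_int (sig m l)"
      using arg_cong[OF sig_pr_sign[OF l], of "of_int :: int \<Rightarrow> 'a"] by simp
    have "(torus m n tt l :: 'a witt) i =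
        lsmult (of_int (sig m (pr m n i))) (Dop m n tt (pr m n i) (Lmult m n tt (xg m l) (xg m (pr m n l))))"
      using True by (simp add: DH_def dL_xg_xg_pr[OF l])
    also have "\<dots> = (if i = pr m n l then lsmult (of_int (sig m l)) (xg m (pr m n l))
        else if i = l then lsmult (- of_int (sig m l)) (xg m l) else 0)"
      using pr_eq_iff[OF even_m even_n True l] pr_eq_iff[OF even_m even_n True l'(1)] l'(2) sign
      by (auto simp: Dop_xg_xg_pr[OF l] pr_pr[OF even_m even_n l])
    also have "\<dots> = (of_int (sig m l) \<cdot>w (Wbasis (pr m n l) (gen_idx m (pr m n l)) - Wbasis l (gen_idx m l))) i"
      using l'(2) by (auto simp: Wbasis_def wsmult_def lsmult_def xg_eq_ebas_gen_idx fun_eq_iff)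
    finally show ?thesis .
  next
    case False
    then show ?thesis using l l' by (auto simp: DH_def Wbasis_def wsmult_def fun_eq_iff)
  qed
qed

lemma Wbr_torus_apply:
  assumes l: "l \<in> Y m n"
  shows "(Wbr m n tt (torus m n tt l) X r x :: 'a) =
    (if r \<in> Y m n \<and> x \<in> Vset TYPE('a) m n tt then ad_weight m n l r x * X r x else 0)"
proof -
  have l': "pr m n l \<in> Y m n" using pr_in_Y[OF even_m even_n l] .
  have "(Wbr m n tt (torus m n tt l) X r x :: 'a) = of_int (sig m l) *
     (Wbr m n tt (Wbasis (pr m n l) (gen_idx m (pr m n l))) X r x - Wbr m n tt (Wbasis l (gen_idx m l)) X r x)"
    unfolding torus_eq[OF l] Wbr_smult_left Wbr_diff_left by (simp add: wsmult_def)
  also have "\<dots> = (if r \<in> Y m n \<and> x \<in> Vset TYPE('a) m n tt then ad_weight m n l r x * X r x else 0)"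
    unfolding Wbr_Wbasis_gen_idx[OF l'] Wbr_Wbasis_gen_idx[OF l] by (simp add: ad_weight_def algebra_simps)
  finally show ?thesis .
qed

lemma Wbr_torus_eigen:
  assumes l: "l \<in> Y m n"
    and X: "\<And>r x. (X :: 'a witt) r x \<noteq> 0 \<Longrightarrow> r \<in> Y m n \<and> x \<in> Vset TYPE('a) m n tt \<and> ad_weight m n l r x = \<mu>"
  shows "Wbr m n tt (torus m n tt l) X = \<mu> \<cdot>w X"
proof (intro ext)
  fix r x
  show "Wbr m n tt (torus m n tt l) X r x = (\<mu> \<cdot>w X) r x"
    using X[of r x] by (cases "X r x = 0") (auto simp: Wbr_torus_apply[OF l] wsmult_def)
qed

lemma Wbr_torus_Wbr:
  assumes l: "l \<in> Y m n"
  shows "(Wbr m n tt (torus m n tt l) (Wbr m n tt X Z) :: 'a witt) =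
     Wbr m n tt (Wbr m n tt (torus m n tt l) X) Z + Wbr m n tt X (Wbr m n tt (torus m n tt l) Z)"
proof (intro ext)
  fix r x
  let ?V = "Vset TYPE('a) m n tt" and ?Y = "Y m n" and ?w = "ad_weight m n l :: nat \<Rightarrow> idx \<Rightarrow> 'a"
  have "(Wbr m n tt (torus m n tt l) (Wbr m n tt X Z) r x :: 'a) =
      (if r \<in> ?Y \<and> x \<in> ?V then ?w r x * Wbr m n tt X Z r x else 0)"
    by (rule Wbr_torus_apply[OF l])
  also have "\<dots> = (\<Sum>i\<in>?Y. \<Sum>a\<in>?V. \<Sum>j\<in>?Y. \<Sum>b\<in>?V.
        X i a * Z j b * (if r \<in> ?Y \<and> x \<in> ?V then ?w r x * bbr m n tt i a j b r x else 0))"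
    by (auto simp: Wbr_apply sum_distrib_left algebra_simps)
  also have "\<dots> = (\<Sum>i\<in>?Y. \<Sum>a\<in>?V. \<Sum>j\<in>?Y. \<Sum>b\<in>?V.
      (?w i a * X i a) * Z j b * bbr m n tt i a j b r x + X i a * (?w j b * Z j b) * bbr m n tt i a j b r x)"
    by (intro sum.cong refl) (simp add: ad_weight_times_bbr algebra_simps)
  also have "\<dots> = (Wbr m n tt (Wbr m n tt (torus m n tt l) X) Z + Wbr m n tt X (Wbr m n tt (torus m n tt l) Z)) r x"
    unfolding plus_fun_apply Wbr_apply[of _ _ _ "Wbr m n tt (torus m n tt l) X"] Wbr_apply[of _ _ _ X]
    by (simp add: Wbr_torus_apply[OF l] sum.distrib cong: sum.cong)
  finally show "(Wbr m n tt (torus m n tt l) (Wbr m n tt X Z) r x :: 'a) =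
     (Wbr m n tt (Wbr m n tt (torus m n tt l) X) Z + Wbr m n tt X (Wbr m n tt (torus m n tt l) Z)) r x" .
qed

lemma torus_nonzeroD:
  assumes l: "l \<in> Y m n" and "(torus m n tt l :: 'a witt) r x \<noteq> 0"
  shows "x = gen_idx m r" "r = l \<or> r = pr m n l"
  using assms(2) unfolding torus_eq[OF l] by (auto simp: wsmult_def Wbasis_def ebas_def split: if_splits)

lemma Wbr_torus_torus:
  assumes a: "a \<in> Y m n" and b: "b \<in> Y m n"
  shows "Wbr m n tt (torus m n tt a) (torus m n tt b) = (0 :: 'a witt)"
proof -
  have "Wbr m n tt (torus m n tt a) (torus m n tt b) = (0::'a) \<cdot>w (torus m n tt b :: 'a witt)"
  proof (rule Wbr_torus_eigen[OF a])
    fix r x assume nz: "(torus m n tt b :: 'a witt) r x \<noteq> 0"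
    have x: "x = gen_idx m r" using torus_nonzeroD(1)[OF b nz] .
    have r: "r \<in> Y m n" using torus_nonzeroD(2)[OF b nz] pr_in_Y[OF even_m even_n b] b by auto
    show "r \<in> Y m n \<and> x \<in> Vset TYPE('a) m n tt \<and> ad_weight m n a r x = 0"
      using r x gen_idx_Vset[OF char_gt_2 tt_pos r] by (simp add: ad_weight_def vf_degree_def)
  qed
  then show ?thesis by (simp add: wsmult_def fun_eq_iff)
qed

lemma Wbr_torus_Wbasis_one:
  assumes "l \<in> Y m n" "j \<in> Y m n"
  shows "Wbr m n tt (torus m n tt l) (Wbasis j one_idx) = ad_weight m n l j one_idx \<cdot>w (Wbasis j one_idx :: 'a witt)"
  by (rule Wbr_torus_eigen[OF assms(1)]) (auto simp: Wbasis_def ebas_def assms(2) split: if_splits)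

lemma ad_weight_one_idx_self:
  assumes "j \<in> Y m n"
  shows "(ad_weight m n j j one_idx :: 'a) = of_int (sig m j)"
  using pr_neq[OF even_m even_n assms] by (simp add: ad_weight_def vf_degree_def)

lemma Wbr_torus_DH_ebas:
  assumes l: "l \<in> Y m n" and g: "g \<in> Vset TYPE('a) m n tt"
  shows "Wbr m n tt (torus m n tt l) (DH m n tt (ebas g)) =
    of_int (sig m l * (int (var_degree (pr m n l) g) - int (var_degree l g))) \<cdot>w (DH m n tt (ebas g) :: 'a witt)"
proof (rule Wbr_torus_eigen[OF l])
  fix r x assume nz: "(DH m n tt (ebas g) :: 'a witt) r x \<noteq> 0"
  note r = DH_ebas_nonzeroD(1)[OF g nz] and D = DH_ebas_nonzeroD(2)[OF g nz]
  have "pr m n l = pr m n r \<longleftrightarrow> l = r" "pr m n l = r \<longleftrightarrow> l = pr m n r"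
    using pr_eq_iff[OF even_m even_n pr_in_Y[OF even_m even_n l] r] pr_pr[OF even_m even_n l]
      pr_eq_iff[OF even_m even_n l r] by auto
  then show "r \<in> Y m n \<and> x \<in> Vset TYPE('a) m n tt \<and>
      ad_weight m n l r x = of_int (sig m l * (int (var_degree (pr m n l) g) - int (var_degree l g)))"
    using r Dbas_nonzero_Vset[OF g D] var_degree_Dbas[OF D, of l] var_degree_Dbas[OF D, of "pr m n l"]
    by (auto simp: ad_weight_def vf_degree_def)
qed

lemma torus_Wpar:
  assumes "l \<in> Y m n"
  shows "(torus m n tt l :: 'a witt) \<in> Wpar m 0"
  unfolding Wpar_def
proof (intro CollectI allI impI)
  fix r x assume "(torus m n tt l :: 'a witt) r x \<noteq> 0"
  then have "x = gen_idx m r" using torus_nonzeroD(1)[OF assms] by blast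
  then show "(card (snd x) + tau m r) mod 2 = 0" by (auto simp: gen_idx_def tau_def)
qed

lemma Wbr_torus_left_skew:
  assumes "l \<in> Y m n" "(X :: 'a witt) \<in> Wpar m p"
  shows "Wbr m n tt X (torus m n tt l) = - Wbr m n tt (torus m n tt l) X"
  using Wbr_skew[OF assms(2) torus_Wpar[OF assms(1)]] by simp

lemma DH_ebas_Wpar:
  assumes g: "g \<in> Vset TYPE('a) m n tt"
  shows "(DH m n tt (ebas g) :: 'a witt) \<in> Wpar m (card (snd g) mod 2)"
  unfolding Wpar_def
proof (intro CollectI allI impI)
  fix r x assume nz: "(DH m n tt (ebas g) :: 'a witt) r x \<noteq> 0"
  note r = DH_ebas_nonzeroD(1)[OF g nz] and D = DH_ebas_nonzeroD(2)[OF g nz]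
  have pr0: "pr m n r \<in> Y0 m \<longleftrightarrow> r \<in> Y0 m" using pr_in_Y0_iff[OF even_m even_n r] .
  have fin: "finite (snd g)" using g by (auto simp: Vset_def valid_idx_def Y1_def intro: finite_subset)
  from Dbas_nonzeroD[OF D] show "(card (snd x) + tau m r) mod 2 = card (snd g) mod 2"
  proof
    assume "pr m n r \<notin> Y0 m \<and> pr m n r \<in> snd g \<and> x = (fst g, snd g - {pr m n r})"
    moreover from this have "card (snd g - {pr m n r}) + 1 = card (snd g)"
      using fin by (metis card_Suc_Diff1 Suc_eq_plus1)
    ultimately show ?thesis using pr0 by (auto simp: tau_def)
  qed (use pr0 in \<open>auto simp: tau_def\<close>)
qed

section \<open>The joint centralizer of the \<open>D\<^sub>j\<close> and the torus\<close>

lemma eq_0_if_centralizes_Wbasis_one_and_torus: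
  assumes X: "W_supported m n tt (X :: 'a witt)"
    and D: "\<And>j. j \<in> Y m n \<Longrightarrow> Wbr m n tt (Wbasis j one_idx) X = 0"
    and T: "\<And>l. l \<in> Y m n \<Longrightarrow> Wbr m n tt (torus m n tt l) X = 0"
  shows "X = 0"
proof (intro ext)
  fix r x
  show "X r x = 0 r x"
  proof (cases "r \<in> Y m n \<and> x \<in> Vset TYPE('a) m n tt")
    case False
    with X have "X r x = 0" unfolding W_supported_def by blast
    then show ?thesis by simp
  next
    case True
    then have r: "r \<in> Y m n" and xv: "x \<in> Vset TYPE('a) m n tt" by auto
    have val: "valid_idx TYPE('a) m n tt x" using xv by (simp add: Vset_def)
    consider "x = one_idx" | t where "fst x t \<noteq> 0" | t where "t \<in> snd x"
      by (cases x) (auto simp: one_idx_def)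
    then show ?thesis
    proof cases
      case 1
      have "ad_weight m n r r one_idx * X r one_idx = 0"
        using fun_cong[OF fun_cong[OF T[OF r]], of r one_idx] r by (simp add: Wbr_torus_apply[OF r])
      with 1 r sig_cases[OF even_m even_n r] show ?thesis by (auto simp: ad_weight_one_idx_self)
    next
      case (2 t)
      then have t: "t \<in> Y0 m" using val by (auto simp: valid_idx_def)
      then have tY: "t \<in> Y m n" using Y0_subset_Y by blast
      have "Dop m n tt t (X r) ((fst x)(t := fst x t - 1), snd x) = 0"
        using fun_cong[OF fun_cong[OF D[OF tY]], of r] r by (simp add: Wbr_Wbasis_one[OF tY])
      with Dop_lower_Y0[OF t xv 2] show ?thesis by simp
    next
      case (3 t)
      then have t: "t \<in> Y m n" "t \<notin> Y0 m" using val by (auto simp: valid_idx_def Y1_iff)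
      have "Dop m n tt t (X r) (fst x, snd x - {t}) = 0"
        using fun_cong[OF fun_cong[OF D[OF t(1)]], of r] r by (simp add: Wbr_Wbasis_one[OF t(1)])
      with Dop_lower_Y1[OF t(2) xv 3] show ?thesis by simp
    qed
  qed
qed

lemma DH_gen_idx_pr:
  assumes j: "j \<in> Y m n"
  obtains c where "c \<noteq> 0" "(DH m n tt (ebas (gen_idx m (pr m n j))) :: 'a witt) = c \<cdot>w Wbasis j one_idx"
proof
  let ?g = "gen_idx m (pr m n j)"
  let ?c = "of_int (sig m (pr m n j)) * (-1) ^ (tau m (pr m n j) * dL (ebas ?g :: 'a lam)) :: 'a"
  have j': "pr m n j \<in> Y m n" using pr_in_Y[OF even_m even_n j] .
  show "?c \<noteq> 0" using sig_cases[OF even_m even_n j'] by auto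
  show "(DH m n tt (ebas ?g) :: 'a witt) = ?c \<cdot>w Wbasis j one_idx"
  proof
    fix i
    have "pr m n i = pr m n j \<longleftrightarrow> i = j" if "i \<in> Y m n"
      using pr_eq_iff[OF even_m even_n that j'] pr_pr[OF even_m even_n j] by auto
    then show "(DH m n tt (ebas ?g) :: 'a witt) i = (?c \<cdot>w Wbasis j one_idx) i"
      using j by (auto simp: DH_ebas[OF gen_idx_Vset[OF char_gt_2 tt_pos j']] Dbas_gen_idx Wbasis_def
          wsmult_def lsmult_def fun_eq_iff)
  qed
qed

lemma Wbasis_one_Hbar:
  assumes "j \<in> Y m n"
  shows "(Wbasis j one_idx :: 'a witt) \<in> Hbar m n tt"
proof -
  obtain c where c: "c \<noteq> 0" "(DH m n tt (ebas (gen_idx m (pr m n j))) :: 'a witt) = c \<cdot>w Wbasis j one_idx"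
    using DH_gen_idx_pr[OF assms] .
  then have "(Wbasis j one_idx :: 'a witt) = inverse c \<cdot>w DH m n tt (ebas (gen_idx m (pr m n j)))" by simp
  also have "\<dots> \<in> Hbar m n tt"
    by (rule Hbar_smult, rule DH_ebas_Hbar, rule gen_idx_Vset[OF char_gt_2 tt_pos pr_in_Y[OF even_m even_n assms]])
  finally show ?thesis .
qed

text \<open>For even k, D_H(x^g) = [D_k, D_H(x^(raise_idx k g))], and both factors lie in Hbar.\<close>

lemma DH_ebas_Hset:
  assumes g: "g \<in> Vset TYPE('a) m n tt" and k: "k \<in> Y0 m" and lt: "fst g k < piv TYPE('a) tt k"
  shows "(DH m n tt (ebas g) :: 'a witt) \<in> Hset m n tt"
proof -
  have gp: "raise_idx k g \<in> Vset TYPE('a) m n tt"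
    using g k lt by (auto simp: raise_idx_def Vset_def valid_idx_def)
  have "(DH m n tt (ebas g) :: 'a witt) = Wbr m n tt (Wbasis k one_idx) (DH m n tt (ebas (raise_idx k g)))"
    by (simp add: Wbr_Wbasis_one_DH_raise_idx[OF k gp])
  also have "\<dots> \<in> Hset m n tt"
    using k Y0_subset_Y by (intro Wbr_in_Hset Wbasis_one_Hbar DH_ebas_Hbar gp) auto
  finally show ?thesis .
qed

context
  assumes m_ge_2: "m \<ge> 2"
begin

lemma DH_ebas_Hset_of_le_1:
  assumes "g \<in> Vset TYPE('a) m n tt" "fst g 1 \<le> 1"
  shows "(DH m n tt (ebas g) :: 'a witt) \<in> Hset m n tt"
proof -
  have k: "1 \<in> Y0 m" using m_ge_2 by (simp add: Y0_def)
  then have "piv TYPE('a) tt 1 \<ge> 2" using piv_ge_2[OF char_gt_2] tt_pos by blast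
  with assms(2) have "fst g 1 < piv TYPE('a) tt 1" by linarith
  with DH_ebas_Hset[OF assms(1) k] show ?thesis .
qed

lemma Wbasis_one_Hset:
  assumes "j \<in> Y m n"
  shows "(Wbasis j one_idx :: 'a witt) \<in> Hset m n tt"
proof -
  obtain c where c: "c \<noteq> 0" "(DH m n tt (ebas (gen_idx m (pr m n j))) :: 'a witt) = c \<cdot>w Wbasis j one_idx"
    using DH_gen_idx_pr[OF assms] .
  have "(DH m n tt (ebas (gen_idx m (pr m n j))) :: 'a witt) \<in> Hset m n tt"
    using gen_idx_Vset[OF char_gt_2 tt_pos pr_in_Y[OF even_m even_n assms]]
    by (rule DH_ebas_Hset_of_le_1) (simp add: gen_idx_def)
  then have "inverse c \<cdot>w (c \<cdot>w Wbasis j one_idx) \<in> Hset m n tt" using c(2) Hset_smult by metis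
  with c(1) show ?thesis by simp
qed

lemma torus_Hset:
  assumes l: "l \<in> Y m n"
  shows "(torus m n tt l :: 'a witt) \<in> Hset m n tt"
proof -
  have "pair_sign m n l \<noteq> (0::'a)" by (simp add: pair_sign_def)
  then have "(torus m n tt l :: 'a witt) = pair_sign m n l \<cdot>w DH m n tt (ebas (pair_idx m n l))"
    by (simp add: Lmult_xg_pr[OF l] DH_lsmult)
  moreover have "(DH m n tt (ebas (pair_idx m n l)) :: 'a witt) \<in> Hset m n tt"
    using pair_idx_Vset[OF l]
    by (rule DH_ebas_Hset_of_le_1) (simp add: pair_idx_def)
  ultimately show ?thesis using Hset_smult by metis
qed

lemma torus_Hpar: "l \<in> Y m n \<Longrightarrow> (torus m n tt l :: 'a witt) \<in> Hpar m n tt 0"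
  using torus_Hset torus_Wpar by (simp add: Hpar_def)

lemma Wbasis_one_Hpar: "j \<in> Y m n \<Longrightarrow> (Wbasis j one_idx :: 'a witt) \<in> Hpar m n tt (tau m j)"
  using Wbasis_one_Hset Wbasis_one_Wpar by (simp add: Hpar_def)

section \<open>Super-biderivations on the torus\<close>

context
  fixes d :: nat and \<phi> :: "'a witt \<Rightarrow> 'a witt \<Rightarrow> 'a witt"
  assumes biderivation: "super_biderivation m n tt d \<phi>"
begin

lemma phi_Hset: "x \<in> Hset m n tt \<Longrightarrow> y \<in> Hset m n tt \<Longrightarrow> \<phi> x y \<in> Hset m n tt"
  using biderivation by (simp add: super_biderivation_def)

lemma phi_smult_right: "x \<in> Hset m n tt \<Longrightarrow> y \<in> Hset m n tt \<Longrightarrow> \<phi> x (c \<cdot>w y) = c \<cdot>w \<phi> x y"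
  using biderivation by (simp add: super_biderivation_def)

lemma phi_zero_right: "x \<in> Hset m n tt \<Longrightarrow> \<phi> x 0 = 0"
  using phi_smult_right[of x x 0] by simp

lemma phi_Hpar: "a < 2 \<Longrightarrow> b < 2 \<Longrightarrow> x \<in> Hpar m n tt a \<Longrightarrow> y \<in> Hpar m n tt b \<Longrightarrow>
    \<phi> x y \<in> Hpar m n tt ((a + b + d) mod 2)"
  using biderivation unfolding super_biderivation_def by blast

lemma phi_Wbr: "a < 2 \<Longrightarrow> b < 2 \<Longrightarrow> c < 2 \<Longrightarrow>
    x \<in> Hpar m n tt a \<Longrightarrow> y \<in> Hpar m n tt b \<Longrightarrow> z \<in> Hpar m n tt c \<Longrightarrow>
    \<phi> x (Wbr m n tt y z) = Wbr m n tt (\<phi> x y) z + ((-1) ^ ((d + a) * b)) \<cdot>w Wbr m n tt y (\<phi> x z)"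
  using biderivation unfolding super_biderivation_def by blast

lemma phi_swap: "a < 2 \<Longrightarrow> b < 2 \<Longrightarrow> x \<in> Hpar m n tt a \<Longrightarrow> y \<in> Hpar m n tt b \<Longrightarrow>
    \<phi> x y = - (((-1) ^ (d * a + d * b + a * b)) \<cdot>w \<phi> y x)"
  using biderivation unfolding super_biderivation_def by blast

lemma phi_torus_Hpar:
  assumes "a \<in> Y m n" "b \<in> Y m n"
  shows "\<phi> (torus m n tt a) (torus m n tt b) \<in> Hpar m n tt (d mod 2)"
  using phi_Hpar[OF _ _ torus_Hpar[OF assms(1)] torus_Hpar[OF assms(2)]] by simp

lemma phi_torus_swap:
  assumes "a \<in> Y m n" "b \<in> Y m n"
  shows "\<phi> (torus m n tt b) (torus m n tt a) = - \<phi> (torus m n tt a) (torus m n tt b)"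
  using phi_swap[OF _ _ torus_Hpar[OF assms(1)] torus_Hpar[OF assms(2)]] by simp

lemma Wbr_torus_phi_torus_sym:
  assumes a: "a \<in> Y m n" and b: "b \<in> Y m n" and c: "c \<in> Y m n"
  shows "Wbr m n tt (torus m n tt c) (\<phi> (torus m n tt a) (torus m n tt b)) =
    Wbr m n tt (torus m n tt b) (\<phi> (torus m n tt a) (torus m n tt c))"
proof -
  have "0 = \<phi> (torus m n tt a) (Wbr m n tt (torus m n tt c) (torus m n tt b))"
    using Wbr_torus_torus[OF c b] phi_zero_right torus_Hset[OF a] by simp
  also have "\<dots> = Wbr m n tt (\<phi> (torus m n tt a) (torus m n tt c)) (torus m n tt b)
      + Wbr m n tt (torus m n tt c) (\<phi> (torus m n tt a) (torus m n tt b))"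
    using phi_Wbr[OF _ _ _ torus_Hpar[OF a] torus_Hpar[OF c] torus_Hpar[OF b]] by simp
  also have "Wbr m n tt (\<phi> (torus m n tt a) (torus m n tt c)) (torus m n tt b)
      = - Wbr m n tt (torus m n tt b) (\<phi> (torus m n tt a) (torus m n tt c))"
    using phi_torus_Hpar[OF a c] by (intro Wbr_torus_left_skew[OF b, of _ "d mod 2"]) (simp add: Hpar_def)
  finally show ?thesis by (metis add.commute eq_neg_iff_add_eq_0 minus_minus)
qed

text \<open>A quantity symmetric in one pair of its three arguments and alternating in another is alternating
  in all three, hence zero when \<open>2 \<noteq> 0\<close>.\<close>

lemma Wbr_torus_phi_torus:
  assumes a: "a \<in> Y m n" and b: "b \<in> Y m n" and c: "c \<in> Y m n"
  shows "Wbr m n tt (torus m n tt c) (\<phi> (torus m n tt a) (torus m n tt b)) = 0"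
proof -
  let ?Q = "\<lambda>a b c. Wbr m n tt (torus m n tt c) (\<phi> (torus m n tt a) (torus m n tt b))"
  have alt: "?Q b a c = - ?Q a b c" if "a \<in> Y m n" "b \<in> Y m n" for a b c
    using phi_torus_swap[OF that] by (simp add: Wbr_uminus_right)
  have "?Q a b c = - ?Q b a c" using alt[OF b a] .
  also have "\<dots> = - ?Q b c a" using Wbr_torus_phi_torus_sym[OF b a c] by simp
  also have "\<dots> = ?Q c b a" using alt[OF b c] by simp
  also have "\<dots> = ?Q c a b" using Wbr_torus_phi_torus_sym[OF c b a] by simp
  also have "\<dots> = - ?Q a c b" using alt[OF c a] by simp
  also have "\<dots> = - ?Q a b c" using Wbr_torus_phi_torus_sym[OF a b c] by simp
  finally show ?thesis
    using witt_eq_0_if_eq_uminus[OF two_neq_zero_if_char_gt_2[OF char_gt_2]] by blast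
qed

lemma phi_torus_Wbasis_one_eigen:
  assumes j: "j \<in> Y m n" and a: "a \<in> Y m n" and b: "b \<in> Y m n"
  shows "ad_weight m n b j one_idx \<cdot>w \<phi> (torus m n tt a) (Wbasis j one_idx) =
    Wbr m n tt (\<phi> (torus m n tt a) (torus m n tt b)) (Wbasis j one_idx)
    + Wbr m n tt (torus m n tt b) (\<phi> (torus m n tt a) (Wbasis j one_idx))"
proof -
  have "\<phi> (torus m n tt a) (Wbr m n tt (torus m n tt b) (Wbasis j one_idx)) =
      Wbr m n tt (\<phi> (torus m n tt a) (torus m n tt b)) (Wbasis j one_idx)
      + Wbr m n tt (torus m n tt b) (\<phi> (torus m n tt a) (Wbasis j one_idx))"
    using phi_Wbr[OF _ _ _ torus_Hpar[OF a] torus_Hpar[OF b] Wbasis_one_Hpar[OF j]] by (simp add: tau_def)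
  moreover have "\<phi> (torus m n tt a) (Wbr m n tt (torus m n tt b) (Wbasis j one_idx)) =
      ad_weight m n b j one_idx \<cdot>w \<phi> (torus m n tt a) (Wbasis j one_idx)"
    using Wbr_torus_Wbasis_one[OF b j] phi_smult_right[OF torus_Hset[OF a] Wbasis_one_Hset[OF j]] by simp
  ultimately show ?thesis by simp
qed

lemma Wbr_torus_phi_torus_Wbasis_one_sym:
  assumes j: "j \<in> Y m n" and a: "a \<in> Y m n" and b: "b \<in> Y m n"
  shows "Wbr m n tt (torus m n tt b) (\<phi> (torus m n tt a) (Wbasis j one_idx)) =
    Wbr m n tt (torus m n tt a) (\<phi> (torus m n tt b) (Wbasis j one_idx))"
proof -
  let ?D = "Wbasis j one_idx :: 'a witt" and ?s = "(-1::'a) ^ (d * tau m j)"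
  have tau: "tau m j < 2" by (simp add: tau_def)
  have swap: "\<phi> ?D (torus m n tt c) = - (?s \<cdot>w \<phi> (torus m n tt c) ?D)" if "c \<in> Y m n" for c
    using phi_swap[OF tau _ Wbasis_one_Hpar[OF j] torus_Hpar[OF that]] by simp
  have par: "\<phi> (torus m n tt c) ?D \<in> Wpar m ((tau m j + d) mod 2)" if "c \<in> Y m n" for c
    using phi_Hpar[OF _ tau torus_Hpar[OF that] Wbasis_one_Hpar[OF j]] by (simp add: Hpar_def)
  have "0 = \<phi> ?D (Wbr m n tt (torus m n tt b) (torus m n tt a))"
    using Wbr_torus_torus[OF b a] phi_zero_right Wbasis_one_Hset[OF j] by simp
  also have "\<dots> = Wbr m n tt (\<phi> ?D (torus m n tt b)) (torus m n tt a)
      + Wbr m n tt (torus m n tt b) (\<phi> ?D (torus m n tt a))"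
    using phi_Wbr[OF tau _ _ Wbasis_one_Hpar[OF j] torus_Hpar[OF b] torus_Hpar[OF a]] by simp
  also have "\<dots> = ?s \<cdot>w (Wbr m n tt (torus m n tt a) (\<phi> (torus m n tt b) ?D)
      - Wbr m n tt (torus m n tt b) (\<phi> (torus m n tt a) ?D))"
    by (simp add: swap[OF a] swap[OF b] Wbr_uminus_left Wbr_uminus_right Wbr_smult_left Wbr_smult_right
        Wbr_torus_left_skew[OF a par[OF b]]) (simp add: wsmult_def fun_eq_iff algebra_simps)
  finally have "?s \<cdot>w (Wbr m n tt (torus m n tt a) (\<phi> (torus m n tt b) ?D)
      - Wbr m n tt (torus m n tt b) (\<phi> (torus m n tt a) ?D)) = 0" ..
  then show ?thesis by (simp add: wsmult_def fun_eq_iff)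
qed

lemma phi_torus_Wbasis_one_combination:
  assumes j: "j \<in> Y m n" and a: "a \<in> Y m n" and b: "b \<in> Y m n"
  shows "ad_weight m n b j one_idx \<cdot>w \<phi> (torus m n tt a) (Wbasis j one_idx)
      - ad_weight m n a j one_idx \<cdot>w \<phi> (torus m n tt b) (Wbasis j one_idx)
    = 2 \<cdot>w Wbr m n tt (\<phi> (torus m n tt a) (torus m n tt b)) (Wbasis j one_idx)"
  using phi_torus_Wbasis_one_eigen[OF j a b] phi_torus_Wbasis_one_eigen[OF j b a]
    Wbr_torus_phi_torus_Wbasis_one_sym[OF j a b] phi_torus_swap[OF a b]
  by (simp add: Wbr_uminus_left) (simp add: wsmult_def fun_eq_iff)

lemma Wbr_torus_Wbr_phi_torus_Wbasis_one:
  assumes j: "j \<in> Y m n" and a: "a \<in> Y m n" and b: "b \<in> Y m n" and c: "c \<in> Y m n"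
  shows "Wbr m n tt (torus m n tt c) (Wbr m n tt (\<phi> (torus m n tt a) (torus m n tt b)) (Wbasis j one_idx)) =
    ad_weight m n c j one_idx \<cdot>w Wbr m n tt (\<phi> (torus m n tt a) (torus m n tt b)) (Wbasis j one_idx)"
  by (simp add: Wbr_torus_Wbr[OF c] Wbr_torus_phi_torus[OF a b c] Wbr_torus_Wbasis_one[OF c j] Wbr_smult_right)

lemma Wbr_phi_torus_Wbasis_one_relation:
  assumes j: "j \<in> Y m n" and a: "a \<in> Y m n" and b: "b \<in> Y m n" and c: "c \<in> Y m n"
  shows "ad_weight m n a j one_idx \<cdot>w Wbr m n tt (\<phi> (torus m n tt b) (torus m n tt c)) (Wbasis j one_idx) =
    ad_weight m n b j one_idx \<cdot>w Wbr m n tt (\<phi> (torus m n tt a) (torus m n tt c)) (Wbasis j one_idx)"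
proof -
  let ?\<mu> = "\<lambda>c. ad_weight m n c j one_idx :: 'a"
  let ?P = "\<lambda>a. \<phi> (torus m n tt a) (Wbasis j one_idx)"
  let ?Z = "\<lambda>a b. Wbr m n tt (\<phi> (torus m n tt a) (torus m n tt b)) (Wbasis j one_idx)"
  have "Wbr m n tt (torus m n tt c) (?\<mu> b \<cdot>w ?P a - ?\<mu> a \<cdot>w ?P b) = Wbr m n tt (torus m n tt c) (2 \<cdot>w ?Z a b)"
    using phi_torus_Wbasis_one_combination[OF j a b] by simp
  then have applied: "?\<mu> b \<cdot>w (?\<mu> c \<cdot>w ?P a - ?Z a c) - ?\<mu> a \<cdot>w (?\<mu> c \<cdot>w ?P b - ?Z b c) = 2 \<cdot>w (?\<mu> c \<cdot>w ?Z a b)"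
    using phi_torus_Wbasis_one_eigen[OF j a c] phi_torus_Wbasis_one_eigen[OF j b c]
    by (simp add: Wbr_diff_right Wbr_smult_right Wbr_torus_Wbr_phi_torus_Wbasis_one[OF j a b c])
  show ?thesis
  proof (intro ext)
    fix r x
    have "?\<mu> b * (?\<mu> c * ?P a r x - ?Z a c r x) - ?\<mu> a * (?\<mu> c * ?P b r x - ?Z b c r x) = 2 * (?\<mu> c * ?Z a b r x)"
      "?\<mu> b * ?P a r x - ?\<mu> a * ?P b r x = 2 * ?Z a b r x"
      using fun_cong[OF fun_cong[OF applied], of r x]
        fun_cong[OF fun_cong[OF phi_torus_Wbasis_one_combination[OF j a b]], of r x]
      by (simp_all add: wsmult_def)
    then show "(?\<mu> a \<cdot>w ?Z b c) r x = (?\<mu> b \<cdot>w ?Z a c) r x"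
      unfolding wsmult_def by algebra
  qed
qed

lemma phi_torus_self: "a \<in> Y m n \<Longrightarrow> \<phi> (torus m n tt a) (torus m n tt a) = 0"
  using phi_torus_swap[of a a] witt_eq_0_if_eq_uminus[OF two_neq_zero_if_char_gt_2[OF char_gt_2]] by blast

lemma Wbr_phi_torus_Wbasis_one:
  assumes j: "j \<in> Y m n" and a: "a \<in> Y m n" and c: "c \<in> Y m n"
  shows "Wbr m n tt (\<phi> (torus m n tt a) (torus m n tt c)) (Wbasis j one_idx) = 0"
proof -
  let ?\<mu> = "\<lambda>c. ad_weight m n c j one_idx :: 'a"
  let ?Z = "\<lambda>a b. Wbr m n tt (\<phi> (torus m n tt a) (torus m n tt b)) (Wbasis j one_idx)"
  note rel = Wbr_phi_torus_Wbasis_one_relation[OF j]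
  have \<mu>j: "?\<mu> j \<noteq> 0" using ad_weight_one_idx_self[OF j] sig_cases[OF even_m even_n j] by auto
  have Z_self: "?Z q q = 0" if "q \<in> Y m n" for q using phi_torus_self[OF that] by simp
  have "?Z j c = 0"
  proof (cases "?\<mu> c = 0")
    case False
    from rel[OF c j c] show ?thesis using Z_self[OF c] False by simp
  next
    case True
    from rel[OF j c j] have "?Z c j = 0" using Z_self[OF j] True \<mu>j by simp
    then show ?thesis using phi_torus_swap[OF j c] by (simp add: Wbr_uminus_left)
  qed
  with rel[OF j a c] \<mu>j show ?thesis by simp
qed

lemma phi_torus_torus:
  assumes a: "a \<in> Y m n" and b: "b \<in> Y m n"
  shows "\<phi> (torus m n tt a) (torus m n tt b) = 0"
proof (rule eq_0_if_centralizes_Wbasis_one_and_torus)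
  show "W_supported m n tt (\<phi> (torus m n tt a) (torus m n tt b))"
    by (intro W_supported_Hset) (use phi_torus_Hpar[OF a b] in \<open>simp add: Hpar_def\<close>)
  show "Wbr m n tt (torus m n tt l) (\<phi> (torus m n tt a) (torus m n tt b)) = 0" if "l \<in> Y m n" for l
    using Wbr_torus_phi_torus[OF a b that] .
  show "Wbr m n tt (Wbasis j one_idx) (\<phi> (torus m n tt a) (torus m n tt b)) = 0" if j: "j \<in> Y m n" for j
  proof -
    have "Wbr m n tt (Wbasis j one_idx) (\<phi> (torus m n tt a) (torus m n tt b)) =
        - ((-1) ^ (tau m j * (d mod 2)) \<cdot>w Wbr m n tt (\<phi> (torus m n tt a) (torus m n tt b)) (Wbasis j one_idx))"
      by (rule Wbr_skew[OF Wbasis_one_Wpar]) (use phi_torus_Hpar[OF a b] in \<open>simp add: Hpar_def\<close>)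
    then show ?thesis using Wbr_phi_torus_Wbasis_one[OF j a b] by simp
  qed
qed

lemma Wbr_torus_phi_torus_eigen:
  assumes i: "i \<in> Y m n" and l: "l \<in> Y m n" and E: "E \<in> Hpar m n tt p" "p < 2"
    and weight: "Wbr m n tt (torus m n tt l) E = \<mu> \<cdot>w E"
  shows "Wbr m n tt (torus m n tt l) (\<phi> (torus m n tt i) E) = \<mu> \<cdot>w \<phi> (torus m n tt i) E"
proof -
  have "E \<in> Hset m n tt" using E(1) by (simp add: Hpar_def)
  then have "\<mu> \<cdot>w \<phi> (torus m n tt i) E = \<phi> (torus m n tt i) (Wbr m n tt (torus m n tt l) E)"
    using weight phi_smult_right[OF torus_Hset[OF i]] by simp
  also have "\<dots> = Wbr m n tt (\<phi> (torus m n tt i) (torus m n tt l)) E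
      + Wbr m n tt (torus m n tt l) (\<phi> (torus m n tt i) E)"
    using phi_Wbr[OF _ _ E(2) torus_Hpar[OF i] torus_Hpar[OF l] E(1)] by simp
  also have "\<dots> = Wbr m n tt (torus m n tt l) (\<phi> (torus m n tt i) E)"
    by (simp add: phi_torus_torus[OF i l])
  finally show ?thesis ..
qed

end

end

end

end

theorem lemma4p2:
  fixes \<phi> :: "('a::alg_closed_field) witt \<Rightarrow> 'a witt \<Rightarrow> 'a witt"
    and m n d i :: nat and tt :: "nat \<Rightarrow> nat" and al :: "nat \<Rightarrow> nat" and u :: "nat set"
  assumes "prime CHAR('a)" and "CHAR('a) > 2"
    and "even m" and "even n" and "m \<ge> 2" and "n \<ge> 2"
    and "\<forall>j\<in>Y0 m. tt j > 0"
    and "super_biderivation m n tt d \<phi>"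
    and "i \<in> Y m n"
    and "valid_idx TYPE('a) m n tt (al, u)"
    and "DH m n tt (ebas (al, u) :: 'a lam) \<in> Hset m n tt"
  shows "\<phi> (DH m n tt (Lmult m n tt (xg m i) (xg m (pr m n i))))
            (DH m n tt (ebas (al, u))) \<in> weight_space m n tt al u"
proof -
  note setting = assms(2,7,3,4)
  let ?E = "DH m n tt (ebas (al, u)) :: 'a witt"
  let ?h = "\<lambda>l. torus m n tt l :: 'a witt"
  have g: "(al, u) \<in> Vset TYPE('a) m n tt" using assms(10) by (simp add: Vset_def)
  have E: "?E \<in> Hpar m n tt (card u mod 2)"
    using assms(11) DH_ebas_Wpar[OF setting g] by (simp add: Hpar_def)
  have "Wbr m n tt (?h l) (\<phi> (?h i) ?E) =
      of_int (sig m l * (int (al (pr m n l)) - int (al l)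
        + (if pr m n l \<in> u then 1 else 0) - (if l \<in> u then 1 else 0))) \<cdot>w \<phi> (?h i) ?E"
    if l: "l \<in> Y m n" for l
    using Wbr_torus_phi_torus_eigen[OF setting assms(5,8,9) l E _ Wbr_torus_DH_ebas[OF setting l g]]
    by (simp add: var_degree_def algebra_simps)
  moreover have "\<phi> (?h i) ?E \<in> Hset m n tt"
    using phi_Hset[OF setting assms(5,8) torus_Hset[OF setting assms(5,9)] assms(11)] .
  ultimately show ?thesis unfolding weight_space_def by blast
qed

end
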